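(* Let $1<p<\infty$, let $\Omega\subseteq\mathbb{R}^N$ be open, let $Z:\Omega\to\mathbb{R}^\ell$, let $V\ge 0$ and $W\in L^1_{loc}(\Omega)$ be functions on $\Omega$ with $V|Z|^p\in L^1_{loc}(\Omega)$, and let $\lambda>0$. Assume there exists a real-valued, nowhere vanishing $\phi\in C^1(\Omega)$ solving in the distributional sense in $\Omega$ $$-\mathrm{div}_{\mathcal{L}}\left(V\,|\nabla_{\mathcal{L}}\phi\cdot Z|^{p-2}(\nabla_{\mathcal{L}}\phi\cdot Z)\,Z\right)=\lambda W|\phi|^{p-2}\phi,$$ i.e. $\int_\Omega V|\nabla_{\mathcal{L}}\phi\cdot Z|^{p-2}(\nabla_{\mathcal{L}}\phi\cdot Z)(\nabla_{\mathcal{L}}\varphi\cdot Z)\,dx=\lambda\int_\Omega W|\phi|^{p-2}\phi\,\varphi\,dx$ for all test functions $\varphi\in C_c^\infty(\Omega)$. Then for every complex-valued $u\in C_0^\infty(\Omega)$, $$\int_\Omega V|\nabla_{\mathcal{L}}u\cdot Z|^p\,dx=\lambda\int_\Omega W|u|^p\,dx+\int_\Omega C_p\left(V^{1/p}\nabla_{\mathcal{L}}u\cdot Z,\;V^{1/p}\phi\,\nabla_{\mathcal{L}}\!\left(\frac{u}{\phi}\right)\cdot Z\right)dx.$$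
   Context: Let $\sigma=(\sigma_{ij})$ be an $\ell\times N$ real matrix-valued function on $\mathbb{R}^N$ with $\sigma_{ij}$ and $\partial_{x_j}\sigma_{ij}$ continuous. The horizontal gradient is $\nabla_{\mathcal{L}}:=\sigma\nabla$ (Euclidean gradient $\nabla$), and for a vector field $F$, $\mathrm{div}_{\mathcal{L}}F:=\mathrm{div}(\sigma^TF)$. For $a,b$ vectors, $a\cdot b=\sum_ia_ib_i$ (no conjugation). For $1<p<\infty$ and $\xi,\eta\in\mathbb{C}^k$, $C_p(\xi,\eta):=|\xi|^p-|\xi-\eta|^p-p|\xi-\eta|^{p-2}\mathrm{Re}\big((\xi-\eta)\cdot\overline{\eta}\big)\ (\ge0)$; here it is applied with $k=1$. *)

theory Defs
  imports "HOL-Analysis.Analysis"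
begin

definition partial_exists :: "'n::finite \<Rightarrow> (real^'n \<Rightarrow> 'a::real_normed_vector) \<Rightarrow> real^'n \<Rightarrow> bool" where
  "partial_exists j f x \<longleftrightarrow> (\<lambda>t::real. f (x + t *\<^sub>R axis j 1)) differentiable (at 0)"

definition partial :: "'n::finite \<Rightarrow> (real^'n \<Rightarrow> 'a::real_normed_vector) \<Rightarrow> real^'n \<Rightarrow> 'a" where
  "partial j f x = vector_derivative (\<lambda>t::real. f (x + t *\<^sub>R axis j 1)) (at 0)"

fun iter_partial :: "'n::finite list \<Rightarrow> (real^'n \<Rightarrow> 'a::real_normed_vector) \<Rightarrow> real^'n \<Rightarrow> 'a" where
  "iter_partial [] f = f"
| "iter_partial (j # js) f = partial j (iter_partial js f)"

definition C1_on :: "(real^'n::finite) set \<Rightarrow> (real^'n \<Rightarrow> 'a::real_normed_vector) \<Rightarrow> bool" where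
  "C1_on S f \<longleftrightarrow> continuous_on S f \<and>
     (\<forall>j. (\<forall>x\<in>S. partial_exists j f x) \<and> continuous_on S (partial j f))"

definition smooth_on :: "(real^'n::finite) set \<Rightarrow> (real^'n \<Rightarrow> 'a::real_normed_vector) \<Rightarrow> bool" where
  "smooth_on S f \<longleftrightarrow> (\<forall>js. (\<forall>j. \<forall>x\<in>S. partial_exists j (iter_partial js f) x) \<and>
                              continuous_on S (iter_partial js f))"

definition test_fun :: "(real^'n::finite) set \<Rightarrow> (real^'n \<Rightarrow> 'a::real_normed_vector) \<Rightarrow> bool" where
  "test_fun \<Omega> f \<longleftrightarrow> smooth_on \<Omega> f \<and> compact (closure {x. f x \<noteq> 0}) \<and> closure {x. f x \<noteq> 0} \<subseteq> \<Omega>"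

definition loc_integrable :: "(real^'n::finite) set \<Rightarrow> (real^'n \<Rightarrow> real) \<Rightarrow> bool" where
  "loc_integrable \<Omega> f \<longleftrightarrow> (\<forall>K. compact K \<and> K \<subseteq> \<Omega> \<longrightarrow> set_integrable lebesgue K f)"

text \<open>Horizontal gradient sigma * grad f (sigma :: l x N matrix, rows indexed by 'l).\<close>
definition hgrad :: "(real^'n::finite \<Rightarrow> real^'n^'l::finite) \<Rightarrow> (real^'n \<Rightarrow> 'a::real_normed_vector) \<Rightarrow> real^'n \<Rightarrow> 'l \<Rightarrow> 'a" where
  "hgrad \<sigma> f x i = (\<Sum>j\<in>UNIV. (\<sigma> x $ i $ j) *\<^sub>R partial j f x)"

text \<open>The scalar (\<nabla>_L f) . Z (no conjugation; Z is real).\<close>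
definition hdotZ :: "(real^'n::finite \<Rightarrow> real^'n^'l::finite) \<Rightarrow> (real^'n \<Rightarrow> real^'l) \<Rightarrow> (real^'n \<Rightarrow> 'a::real_normed_vector) \<Rightarrow> real^'n \<Rightarrow> 'a" where
  "hdotZ \<sigma> Z f x = (\<Sum>i\<in>UNIV. (Z x $ i) *\<^sub>R hgrad \<sigma> f x i)"

definition Cp :: "real \<Rightarrow> complex \<Rightarrow> complex \<Rightarrow> real" where
  "Cp p \<xi> \<eta> = norm \<xi> powr p - norm (\<xi> - \<eta>) powr p
       - p * norm (\<xi> - \<eta>) powr (p - 2) * Re ((\<xi> - \<eta>) * cnj \<eta>)"

end

theory Submission
  imports Defs "HOL-Computational_Algebra.Polynomial"
begin

text \<open>Where \<open>\<phi> \<noteq> 0\<close>, the chain and quotient rules give pointwise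
  \<open>C\<^sub>p(V\<^sup>1\<^sup>/\<^sup>p \<nabla>u\<cdot>Z, V\<^sup>1\<^sup>/\<^sup>p \<phi> \<nabla>(u/\<phi>)\<cdot>Z) = V |\<nabla>u\<cdot>Z|\<^sup>p - V |\<nabla>\<phi>\<cdot>Z|\<^sup>p\<^sup>-\<^sup>2 (\<nabla>\<phi>\<cdot>Z) (\<nabla>\<psi>\<cdot>Z)\<close>
  with \<open>\<psi> = |u|\<^sup>p / (|\<phi>|\<^sup>p\<^sup>-\<^sup>2 \<phi>)\<close>. Integrating, the last term is the left-hand side of the
  weak equation tested against \<open>\<psi>\<close>, which equals \<open>\<lambda> \<integral> W |u|\<^sup>p\<close>. As \<open>\<phi>\<close> is only \<open>C\<^sup>1\<close>, so is
  \<open>\<psi>\<close>: the weak equation is first extended to compactly supported \<open>C\<^sup>1\<close> functions by mollification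
  and dominated convergence, with the local integrability of \<open>V |Z|\<^sup>p\<close> and \<open>W\<close> giving the majorants.\<close>

section \<open>Smooth bump functions\<close>

definition deriv_seq :: "(nat \<Rightarrow> real \<Rightarrow> real) \<Rightarrow> bool" where
  "deriv_seq G \<longleftrightarrow> (\<forall>k x. (G k has_real_derivative G (Suc k) x) (at x))"

lemma deriv_seq_continuous: "deriv_seq G \<Longrightarrow> continuous_on UNIV (G k)"
  unfolding deriv_seq_def by (meson DERIV_isCont continuous_at_imp_continuous_on)

lemma binomial_Suc_eq: "Suc n choose k = (n choose k) + (if k = 0 then 0 else n choose (k - 1))"
  by (cases k) simp_all

lemma deriv_seq_Leibniz:
  assumes G: "deriv_seq G" and H: "deriv_seq H"
  shows "deriv_seq (\<lambda>k t. \<Sum>i=0..k. real (k choose i) * G i t * H (k - i) t)"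
  unfolding deriv_seq_def
proof (intro allI)
  fix n x
  have dG: "(G i has_real_derivative G (Suc i) x) (at x)" for i using G by (auto simp: deriv_seq_def)
  have dH: "(H i has_real_derivative H (Suc i) x) (at x)" for i using H by (auto simp: deriv_seq_def)
  have split: "(\<Sum>i = 0..Suc n. real (Suc n choose i) * G i x * H (Suc n - i) x) =
      (\<Sum>i = 0..Suc n. real (n choose i) * G i x * H (Suc n - i) x) +
      (\<Sum>i = 0..Suc n. (if i = 0 then 0 else real (n choose (i - 1))) * G i x * H (Suc n - i) x)"
    unfolding sum.distrib[symmetric] by (rule sum.cong) (auto simp: binomial_Suc_eq algebra_simps)
  have low: "(\<Sum>i = 0..Suc n. real (n choose i) * G i x * H (Suc n - i) x) =
      (\<Sum>i = 0..n. real (n choose i) * G i x * H (Suc (n - i)) x)"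
    by (simp add: Suc_diff_le)
  have high: "(\<Sum>i = 0..Suc n. (if i = 0 then 0 else real (n choose (i - 1))) * G i x * H (Suc n - i) x)
      = (\<Sum>i = 0..n. real (n choose i) * G (Suc i) x * H (n - i) x)"
    by (subst sum.atLeast0_atMost_Suc_shift) simp
  have Leibniz: "(\<Sum>i = 0..Suc n. real (Suc n choose i) * G i x * H (Suc n - i) x) =
      (\<Sum>i = 0..n. real (n choose i) * (G (Suc i) x * H (n - i) x + G i x * H (Suc (n - i)) x))"
    unfolding split low high by (simp add: algebra_simps sum.distrib)
  have "((\<lambda>t. \<Sum>i=0..n. real (n choose i) * G i t * H (n - i) t) has_real_derivative
      (\<Sum>i = 0..n. real (n choose i) * (G (Suc i) x * H (n - i) x + G i x * H (Suc (n - i)) x))) (at x)"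
    unfolding mult.assoc
    by (intro DERIV_sum DERIV_cmult DERIV_mult[OF dG dH, THEN DERIV_cong]) (simp add: Suc_diff_le)
  then show "((\<lambda>t. \<Sum>i=0..n. real (n choose i) * G i t * H (n - i) t) has_real_derivative
      (\<Sum>i = 0..Suc n. real (Suc n choose i) * G i x * H (Suc n - i) x)) (at x)"
    unfolding Leibniz .
qed

lemma deriv_seq_reflect:
  assumes G: "deriv_seq G"
  shows "deriv_seq (\<lambda>k t. (-1)^k * G k (a - t))"
  unfolding deriv_seq_def
proof (intro allI)
  fix k x
  have "((\<lambda>t. G k (a - t)) has_real_derivative G (Suc k) (a - x) * (-1)) (at x)"
    using G unfolding deriv_seq_def
    by (intro DERIV_chain2[where f="G k"]) (auto intro!: derivative_eq_intros)
  then show "((\<lambda>t. (-1)^k * G k (a - t)) has_real_derivative (-1)^Suc k * G (Suc k) (a - x)) (at x)"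
    by (auto intro!: derivative_eq_intros)
qed

text \<open>The derivatives of \<open>exp (-1/t)\<close> are \<open>P\<^sub>k(1/t) exp (-1/t)\<close>
  with \<open>P\<^sub>k\<^sub>+\<^sub>1(s) = s\<^sup>2 (P\<^sub>k(s) - P\<^sub>k'(s))\<close>.\<close>

primrec flat_poly :: "nat \<Rightarrow> real poly" where
  "flat_poly 0 = 1"
| "flat_poly (Suc k) = [:0, 0, 1:] * (flat_poly k - pderiv (flat_poly k))"

definition flat :: "nat \<Rightarrow> real \<Rightarrow> real" where
  "flat k t = (if t > 0 then poly (flat_poly k) (1/t) * exp (-1/t) else 0)"

lemma poly_times_exp_neg_tendsto_0:
  fixes P :: "real poly"
  shows "((\<lambda>s. poly P s * exp (- s)) \<longlongrightarrow> 0) at_top"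
proof -
  have "((\<lambda>s. \<Sum>i\<le>degree P. coeff P i * (s ^ i / exp s)) \<longlongrightarrow> (\<Sum>i\<le>degree P. coeff P i * 0)) at_top"
    by (intro tendsto_sum tendsto_mult tendsto_const tendsto_power_div_exp_0)
  moreover have "poly P s * exp (- s) = (\<Sum>i\<le>degree P. coeff P i * (s ^ i / exp s))" for s
    by (simp add: poly_altdef exp_minus divide_inverse sum_distrib_right mult.assoc)
  ultimately show ?thesis by simp
qed

lemma flat_has_derivative_pos:
  assumes "x > 0"
  shows "(flat k has_real_derivative flat (Suc k) x) (at x)"
proof -
  have "((\<lambda>t. poly (flat_poly k) (1/t) * exp (-1/t)) has_real_derivative
      poly (pderiv (flat_poly k)) (1/x) * (- 1 / x^2) * exp (-1/x) + poly (flat_poly k) (1/x) * (exp (-1/x) * (1/x^2))) (at x)"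
    using assms
    by (auto intro!: derivative_eq_intros DERIV_chain2[where f="poly (flat_poly k)", OF poly_DERIV]
        simp: field_simps power2_eq_square)
  also have "poly (pderiv (flat_poly k)) (1/x) * (- 1 / x^2) * exp (-1/x) + poly (flat_poly k) (1/x) * (exp (-1/x) * (1/x^2))
      = flat (Suc k) x"
    using assms by (simp add: flat_def algebra_simps power2_eq_square divide_simps)
  finally show ?thesis
    by (rule has_field_derivative_transform_within_open[where S="{0<..}"]) (use assms in \<open>auto simp: flat_def\<close>)
qed

lemma flat_has_derivative_neg:
  assumes "x < 0"
  shows "(flat k has_real_derivative flat (Suc k) x) (at x)"
proof -
  have "((\<lambda>t. 0) has_real_derivative flat (Suc k) x) (at x)" using assms by (simp add: flat_def)
  then show ?thesis
    by (rule has_field_derivative_transform_within_open[where S="{..<0}"]) (use assms in \<open>auto simp: flat_def\<close>)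
qed

lemma flat_has_derivative_0: "(flat k has_real_derivative flat (Suc k) 0) (at 0)"
proof -
  have "((\<lambda>y. poly ([:0,1:] * flat_poly k) (inverse y) * exp (- inverse y)) \<longlongrightarrow> 0) (at_right 0)"
    by (rule filterlim_compose[OF poly_times_exp_neg_tendsto_0 filterlim_inverse_at_top_right])
  moreover have "\<forall>\<^sub>F y in at_right 0. poly ([:0,1:] * flat_poly k) (inverse y) * exp (- inverse y) = flat k y / y"
    using eventually_at_right_less[of "0::real"] by eventually_elim (auto simp: flat_def field_simps)
  ultimately have right: "((\<lambda>y. flat k y / y) \<longlongrightarrow> 0) (at_right 0)"
    by (rule Lim_transform_eventually)
  have "\<forall>\<^sub>F y in at_left 0. y < (0::real)"
    by (simp add: eventually_at_filter)
  then have "\<forall>\<^sub>F y in at_left 0. 0 = flat k y / y"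
    by eventually_elim (auto simp: flat_def)
  then have left: "((\<lambda>y. flat k y / y) \<longlongrightarrow> 0) (at_left 0)"
    by (rule Lim_transform_eventually[OF tendsto_const])
  have "((\<lambda>y. flat k y / y) \<longlongrightarrow> 0) (at 0)"
    using left right by (rule filterlim_split_at)
  then show ?thesis by (simp add: has_field_derivative_iff flat_def)
qed

lemma deriv_seq_flat: "deriv_seq flat"
  unfolding deriv_seq_def
  using flat_has_derivative_pos flat_has_derivative_neg flat_has_derivative_0
  by (metis linorder_cases)

definition bump :: "real \<Rightarrow> nat \<Rightarrow> real \<Rightarrow> real" where
  "bump a k t = (\<Sum>i=0..k. real (k choose i) * flat i t * ((-1)^(k - i) * flat (k - i) (a - t)))"

lemma deriv_seq_bump: "deriv_seq (bump a)"
  unfolding bump_def[abs_def]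
  by (rule deriv_seq_Leibniz[OF deriv_seq_flat deriv_seq_reflect[OF deriv_seq_flat]])

lemma bump_0: "bump a 0 t = (if 0 < t \<and> t < a then exp (-1/t) * exp (-1/(a - t)) else 0)"
  by (simp add: bump_def flat_def)

lemma bump_0_lower_bound:
  assumes "a > 0" "a/4 \<le> t" "t \<le> 3*a/4"
  shows "exp (-8/a) \<le> bump a 0 t"
proof -
  have "t > 0" "a - t > 0" using assms by auto
  moreover have "1/t \<le> 4/a" "1/(a - t) \<le> 4/a"
    using assms by (simp_all add: field_simps)
  ultimately have "-8/a \<le> -1/t + -1/(a - t)"
    by simp
  then show ?thesis
    using \<open>t > 0\<close> \<open>a - t > 0\<close> by (simp add: bump_0 exp_add[symmetric])
qed

definition tensor_deriv :: "(nat \<Rightarrow> real \<Rightarrow> real) \<Rightarrow> ('n::finite \<Rightarrow> nat) \<Rightarrow> real^'n \<Rightarrow> real" where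
  "tensor_deriv G c z = (\<Prod>i\<in>UNIV. G (c i) (z $ i))"

lemma tensor_deriv_has_partial:
  assumes G: "deriv_seq G"
  shows "((\<lambda>t. tensor_deriv G c (z + t *\<^sub>R axis j 1)) has_field_derivative
           tensor_deriv G (c(j := Suc (c j))) z) (at 0)"
proof -
  let ?R = "\<Prod>i\<in>UNIV - {j}. G (c i) (z $ i)"
  have eq: "tensor_deriv G c (z + t *\<^sub>R axis j 1) = G (c j) (z $ j + t) * ?R" for t
    unfolding tensor_deriv_def by (subst prod.remove[of UNIV j]) (auto simp: axis_def intro!: prod.cong)
  have eq': "tensor_deriv G (c(j := Suc (c j))) z = G (Suc (c j)) (z $ j) * ?R"
    unfolding tensor_deriv_def by (subst prod.remove[of UNIV j]) (auto intro!: prod.cong)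
  have "(G (c j) has_real_derivative G (Suc (c j)) (z $ j)) (at (0 + z $ j))"
    using G by (simp add: deriv_seq_def)
  then have "((\<lambda>t. G (c j) (t + z $ j)) has_real_derivative G (Suc (c j)) (z $ j)) (at 0)"
    by (rule DERIV_shift[THEN iffD1])
  then have "((\<lambda>t. G (c j) (z $ j + t) * ?R) has_real_derivative G (Suc (c j)) (z $ j) * ?R) (at 0)"
    by (auto intro!: DERIV_cmult_right simp: add.commute)
  then show ?thesis unfolding eq eq' .
qed

lemma continuous_on_tensor_deriv:
  assumes G: "deriv_seq G"
  shows "continuous_on S (tensor_deriv G c)"
  unfolding tensor_deriv_def
  by (intro continuous_on_prod continuous_on_compose2[OF deriv_seq_continuous[OF G]] continuous_intros) auto

lemma tensor_bump_nonneg: "0 \<le> tensor_deriv (bump a) (\<lambda>_. 0) z"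
  unfolding tensor_deriv_def by (intro prod_nonneg) (simp add: bump_0)

lemma tensor_bump_eq_0:
  assumes "z \<notin> cbox 0 (a *\<^sub>R (1::real^'n::finite))"
  shows "tensor_deriv (bump a) (\<lambda>_. 0) z = 0"
proof -
  obtain i where "\<not> (0 \<le> z $ i \<and> z $ i \<le> a)"
    using assms by (auto simp: mem_box_cart)
  then have "bump a 0 (z $ i) = 0" by (auto simp: bump_0)
  then show ?thesis unfolding tensor_deriv_def by (intro prod_zero) auto
qed

lemma tensor_bump_integral_pos:
  assumes a: "a > 0"
  shows "0 < integral (cbox 0 (a *\<^sub>R 1)) (tensor_deriv (bump a) (\<lambda>_::'n::finite. 0))"
proof -
  let ?k = "tensor_deriv (bump a) (\<lambda>_::'n. 0)"
  let ?S = "cbox ((a/4) *\<^sub>R (1::real^'n)) ((3*a/4) *\<^sub>R 1)"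
  have k: "continuous_on UNIV ?k" by (rule continuous_on_tensor_deriv[OF deriv_seq_bump])
  have lower: "exp (-8/a) ^ CARD('n) \<le> ?k z" if "z \<in> ?S" for z
  proof -
    have "(\<Prod>i\<in>(UNIV::'n set). exp (-8/a)) \<le> ?k z"
      unfolding tensor_deriv_def
    proof (intro prod_mono conjI)
      fix i
      have "a/4 \<le> z $ i" "z $ i \<le> 3*a/4" using that by (auto simp: mem_box_cart)
      then show "exp (-8/a) \<le> bump a 0 (z $ i)" using a by (intro bump_0_lower_bound)
    qed auto
    then show ?thesis by simp
  qed
  have "(a/2) *\<^sub>R 1 \<in> ?S" using a by (simp add: mem_box_cart)
  then have "measure lborel ?S = (\<Prod>i\<in>(UNIV::'n set). a/2)"
    using content_cbox_cart[of "(a/4) *\<^sub>R (1::real^'n)" "(3*a/4) *\<^sub>R 1"] by auto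
  then have "0 < measure lborel ?S"
    using a by (simp add: prod_pos)
  then have "0 < integral ?S (\<lambda>z. exp (-8/a) ^ CARD('n))"
    by simp
  also have "\<dots> \<le> integral ?S ?k"
    by (intro integral_le integrable_continuous continuous_on_subset[OF k] lower) auto
  also have "\<dots> \<le> integral (cbox 0 (a *\<^sub>R 1)) ?k"
  proof (intro integral_subset_le integrable_continuous continuous_on_subset[OF k] ballI tensor_bump_nonneg)
    show "?S \<subseteq> cbox 0 (a *\<^sub>R 1)"
      using a by (auto simp: mem_box_cart) (smt (verit))+
  qed auto
  finally show ?thesis .
qed

definition mollifier :: "real \<Rightarrow> ('n::finite \<Rightarrow> nat) \<Rightarrow> real^'n \<Rightarrow> real" where
  "mollifier a c z =
     tensor_deriv (bump a) c z / integral (cbox 0 (a *\<^sub>R 1)) (tensor_deriv (bump a) (\<lambda>_::'n. 0))"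

lemma continuous_on_mollifier: "continuous_on S (mollifier a c)"
  unfolding mollifier_def[abs_def] divide_inverse
  by (intro continuous_intros continuous_on_tensor_deriv[OF deriv_seq_bump])

lemma mollifier_has_partial:
  "((\<lambda>t. mollifier a c (z + t *\<^sub>R axis j 1)) has_field_derivative mollifier a (c(j := Suc (c j))) z) (at 0)"
  unfolding mollifier_def by (intro DERIV_cdivide tensor_deriv_has_partial[OF deriv_seq_bump])

lemma mollifier_nonneg:
  assumes "a > 0"
  shows "0 \<le> mollifier a (\<lambda>_. 0) (z::real^'n::finite)"
  unfolding mollifier_def
  using tensor_bump_integral_pos[OF assms, where 'n='n] tensor_bump_nonneg[of a z] by simp

lemma mollifier_eq_0: "z \<notin> cbox 0 (a *\<^sub>R 1) \<Longrightarrow> mollifier a (\<lambda>_. 0) z = 0"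
  unfolding mollifier_def by (simp add: tensor_bump_eq_0)

lemma integral_mollifier:
  "a > 0 \<Longrightarrow> integral (cbox 0 (a *\<^sub>R 1)) (mollifier a (\<lambda>_::'n::finite. 0)) = 1"
  unfolding mollifier_def using tensor_bump_integral_pos[of a, where 'n='n] by simp

section \<open>Convolution over a box\<close>

lemma partial_from_vector_derivative:
  assumes "((\<lambda>t. f (x + t *\<^sub>R axis j 1)) has_vector_derivative D) (at 0)"
  shows "partial_exists j f x" "partial j f x = D"
  using assms unfolding partial_exists_def partial_def
  by (auto intro: differentiableI_vector vector_derivative_at)

lemma partial_from_real_derivative:
  assumes "((\<lambda>t. f (x + t *\<^sub>R axis j 1)) has_real_derivative D) (at 0)"
  shows "partial_exists j f x" "partial j f x = D"
  using assms partial_from_vector_derivative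
  by (auto simp: has_real_derivative_iff_has_vector_derivative)

lemma has_vector_derivative_partial:
  assumes "partial_exists j f x"
  shows "((\<lambda>t. f (x + t *\<^sub>R axis j 1)) has_vector_derivative partial j f x) (at 0)"
  using assms unfolding partial_exists_def partial_def by (simp add: vector_derivative_works)

definition box_conv ::
    "real^'n::finite \<Rightarrow> real^'n \<Rightarrow> (real^'n \<Rightarrow> real) \<Rightarrow> (real^'n \<Rightarrow> real) \<Rightarrow> real^'n \<Rightarrow> real" where
  "box_conv lo hi F G x = integral (cbox lo hi) (\<lambda>y. F (x - y) * G y)"

lemma box_conv_has_partial:
  fixes F F' G :: "real^'n::finite \<Rightarrow> real"
  assumes F: "continuous_on UNIV F" and F': "continuous_on UNIV F'" and G: "continuous_on UNIV G"
    and dF: "\<And>w. ((\<lambda>t. F (w + t *\<^sub>R axis j 1)) has_field_derivative F' w) (at 0)"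
  shows "((\<lambda>t. box_conv lo hi F G (x + t *\<^sub>R axis j 1)) has_field_derivative box_conv lo hi F' G x) (at 0)"
proof -
  define e where "e = (axis j 1 :: real^'n)"
  have d: "((\<lambda>t. F (x + t *\<^sub>R e - y) * G y) has_field_derivative F' (x + s *\<^sub>R e - y) * G y) (at s within UNIV)"
    for s y
  proof -
    have "((\<lambda>t. F ((x + s *\<^sub>R e - y) + t *\<^sub>R e)) has_field_derivative F' (x + s *\<^sub>R e - y)) (at (s + - s))"
      using dF[of "x + s *\<^sub>R e - y"] by (simp add: e_def)
    then have "((\<lambda>t. F ((x + s *\<^sub>R e - y) + (t + - s) *\<^sub>R e)) has_field_derivative F' (x + s *\<^sub>R e - y)) (at s)"
      by (rule DERIV_shift[THEN iffD1])
    moreover have "(\<lambda>t. F ((x + s *\<^sub>R e - y) + (t + - s) *\<^sub>R e)) = (\<lambda>t. F (x + t *\<^sub>R e - y))"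
      by (rule ext) (simp add: algebra_simps)
    ultimately show ?thesis by (auto intro!: DERIV_cmult_right)
  qed
  have c: "continuous_on (UNIV \<times> cbox lo hi) (\<lambda>(t, y). F' (x + t *\<^sub>R e - y) * G y)"
    unfolding split_beta
    by (intro continuous_intros continuous_on_compose2[OF F'] continuous_on_compose2[OF G]) auto
  have c': "continuous_on UNIV (\<lambda>y. F (x + t *\<^sub>R e - y) * G y)" for t
    by (intro continuous_intros continuous_on_compose2[OF F] G) auto
  have "((\<lambda>t. integral (cbox lo hi) (\<lambda>y. F (x + t *\<^sub>R e - y) * G y)) has_field_derivative
      integral (cbox lo hi) (\<lambda>y. F' (x + 0 *\<^sub>R e - y) * G y)) (at 0 within UNIV)"
    by (rule leibniz_rule_field_derivative[where fx="\<lambda>t y. F' (x + t *\<^sub>R e - y) * G y", OF d _ c])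
       (auto intro!: integrable_continuous continuous_on_subset[OF c'])
  then show ?thesis by (simp add: box_conv_def e_def)
qed

lemma continuous_on_box_conv:
  fixes F G :: "real^'n::finite \<Rightarrow> real"
  assumes F: "continuous_on UNIV F" and G: "continuous_on UNIV G"
  shows "continuous_on S (box_conv lo hi F G)"
proof -
  have "continuous_on (UNIV \<times> cbox lo hi) (\<lambda>(x, y). F (x - y) * G y)"
    unfolding split_beta
    by (intro continuous_intros continuous_on_compose2[OF F] continuous_on_compose2[OF G]) auto
  then have "continuous_on UNIV (box_conv lo hi F G)"
    unfolding box_conv_def[abs_def] by (rule integral_continuous_on_param)
  then show ?thesis by (rule continuous_on_subset) auto
qed

text \<open>Both sides are the convolution integral over the whole space.\<close>

lemma box_conv_commute:
  fixes F G :: "real^'n::finite \<Rightarrow> real"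
  assumes F: "continuous_on UNIV F" and G: "continuous_on UNIV G"
    and G0: "\<And>y. y \<notin> cbox lo hi \<Longrightarrow> G y = 0" and F0: "\<And>z. z \<notin> cbox lo' hi' \<Longrightarrow> F z = 0"
  shows "box_conv lo hi F G x = box_conv lo' hi' G F x"
proof -
  define h where "h y = F (x - y) * G y" for y
  have h: "continuous_on UNIV h"
    unfolding h_def by (intro continuous_intros continuous_on_compose2[OF F] G) auto
  have "(h has_integral box_conv lo hi F G x) (cbox lo hi)"
    unfolding box_conv_def h_def[symmetric]
    by (intro integrable_integral integrable_continuous continuous_on_subset[OF h]) auto
  from has_integral_affinity[OF this, of "-1" x]
  have "((\<lambda>z. h (x - z)) has_integral box_conv lo hi F G x) ((\<lambda>z. - z + x) ` cbox lo hi)"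
    by simp
  then have "((\<lambda>z. h (x - z)) has_integral box_conv lo hi F G x) UNIV"
  proof (rule has_integral_on_superset)
    fix z assume "z \<notin> (\<lambda>z. - z + x) ` cbox lo hi"
    then have "x - z \<notin> cbox lo hi"
      by (metis (no_types, lifting) add.commute diff_add_cancel image_eqI minus_diff_eq uminus_add_conv_diff)
    then show "h (x - z) = 0" by (simp add: h_def G0)
  qed auto
  then have 1: "((\<lambda>z. G (x - z) * F z) has_integral box_conv lo hi F G x) UNIV"
    by (simp add: h_def mult.commute)
  have h': "continuous_on UNIV (\<lambda>z. G (x - z) * F z)"
    by (intro continuous_intros continuous_on_compose2[OF G] F) auto
  have "((\<lambda>z. G (x - z) * F z) has_integral box_conv lo' hi' G F x) (cbox lo' hi')"
    unfolding box_conv_def by (intro integrable_integral integrable_continuous continuous_on_subset[OF h']) auto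
  then have 2: "((\<lambda>z. G (x - z) * F z) has_integral box_conv lo' hi' G F x) UNIV"
    by (rule has_integral_on_superset) (auto simp: F0)
  show ?thesis using 1 2 by (rule has_integral_unique)
qed

lemma box_conv_mollifier_has_partial:
  assumes f: "continuous_on UNIV f"
  shows "((\<lambda>t. box_conv lo hi (mollifier a c) f (x + t *\<^sub>R axis j 1)) has_real_derivative
           box_conv lo hi (mollifier a (c(j := Suc (c j)))) f x) (at 0)"
  by (rule box_conv_has_partial[OF continuous_on_mollifier continuous_on_mollifier f mollifier_has_partial])

lemma iter_partial_box_conv_mollifier:
  assumes f: "continuous_on UNIV f"
  shows "iter_partial js (box_conv lo hi (mollifier a c) f) =
           box_conv lo hi (mollifier a (\<lambda>i. c i + count_list js i)) f"
proof (induction js)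
  case Nil
  then show ?case by simp
next
  case (Cons j js)
  define c' where "c' = (\<lambda>i. c i + count_list js i)"
  have "c'(j := Suc (c' j)) = (\<lambda>i. c i + count_list (j # js) i)"
    by (auto simp: c'_def)
  then have "partial j (box_conv lo hi (mollifier a c') f) x =
      box_conv lo hi (mollifier a (\<lambda>i. c i + count_list (j # js) i)) f x" for x
    using partial_from_real_derivative(2)[OF box_conv_mollifier_has_partial[OF f]] by metis
  moreover have "iter_partial (j # js) (box_conv lo hi (mollifier a c) f) =
      partial j (box_conv lo hi (mollifier a c') f)"
    using Cons.IH by (simp add: c'_def)
  ultimately show ?case by (simp add: fun_eq_iff)
qed

lemma smooth_on_box_conv_mollifier:
  assumes f: "continuous_on UNIV f"
  shows "smooth_on S (box_conv lo hi (mollifier a c) f)"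
  unfolding smooth_on_def iter_partial_box_conv_mollifier[OF f]
  using partial_from_real_derivative(1)[OF box_conv_mollifier_has_partial[OF f]]
    continuous_on_box_conv[OF continuous_on_mollifier f]
  by blast

definition mollify :: "real \<Rightarrow> (real^'n::finite \<Rightarrow> real) \<Rightarrow> real^'n \<Rightarrow> real" where
  "mollify a f = box_conv 0 (a *\<^sub>R 1) f (mollifier a (\<lambda>_. 0))"

lemma norm_le_in_cube:
  fixes a :: real
  assumes "z \<in> cbox 0 (a *\<^sub>R (1::real^'n::finite))"
  shows "norm z \<le> CARD('n) * a"
proof -
  have "norm z \<le> (\<Sum>i\<in>UNIV. \<bar>z $ i\<bar>)" by (rule norm_le_l1_cart)
  also have "\<dots> \<le> (\<Sum>i\<in>(UNIV::'n set). a)"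
    using assms by (intro sum_mono) (auto simp: mem_box_cart)
  finally show ?thesis by simp
qed

lemma mollify_abs_le:
  fixes f :: "real^'n::finite \<Rightarrow> real"
  assumes f: "continuous_on UNIV f" and a: "a > 0"
    and B: "\<And>z. z \<in> cbox 0 (a *\<^sub>R 1) \<Longrightarrow> \<bar>f (x - z)\<bar> \<le> B"
  shows "\<bar>mollify a f x\<bar> \<le> B"
proof -
  have c: "continuous_on UNIV (\<lambda>z. f (x - z) * mollifier a (\<lambda>_. 0) z)"
    by (intro continuous_intros continuous_on_compose2[OF f] continuous_on_mollifier) auto
  have "norm (mollify a f x) \<le> integral (cbox 0 (a *\<^sub>R 1)) (\<lambda>z::real^'n. B * mollifier a (\<lambda>_. 0) z)"
    unfolding mollify_def box_conv_def
  proof (rule integral_norm_bound_integral)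
    fix z :: "real^'n" assume "z \<in> cbox 0 (a *\<^sub>R 1)"
    then show "norm (f (x - z) * mollifier a (\<lambda>_. 0) z) \<le> B * mollifier a (\<lambda>_. 0) z"
      using B mollifier_nonneg[OF a, of z] unfolding real_norm_def abs_mult
      by (metis abs_of_nonneg mult_right_mono)
  qed (auto intro!: integrable_continuous continuous_on_subset[OF c] continuous_intros continuous_on_mollifier)
  also have "\<dots> = B" using integral_mollifier[OF a, where 'n='n] by simp
  finally show ?thesis by simp
qed

lemma mollify_bound:
  fixes f :: "real^'n::finite \<Rightarrow> real"
  assumes "continuous_on UNIV f" "\<And>y. \<bar>f y\<bar> \<le> B" "a > 0"
  shows "\<bar>mollify a f x\<bar> \<le> B"
  using assms by (intro mollify_abs_le)

lemma mollify_minus_const: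
  fixes f :: "real^'n::finite \<Rightarrow> real"
  assumes f: "continuous_on UNIV f" and a: "a > 0"
  shows "mollify a (\<lambda>y. f y - c) x = mollify a f x - c"
proof -
  let ?k = "mollifier a (\<lambda>_. 0) :: real^'n \<Rightarrow> real"
  have "continuous_on UNIV (\<lambda>z. f (x - z) * ?k z)"
    by (intro continuous_intros continuous_on_compose2[OF f] continuous_on_mollifier) auto
  then have fk: "(\<lambda>z. f (x - z) * ?k z) integrable_on cbox 0 (a *\<^sub>R 1)"
    by (rule integrable_continuous[OF continuous_on_subset]) simp
  have k: "?k integrable_on cbox 0 (a *\<^sub>R 1)"
    by (rule integrable_continuous[OF continuous_on_mollifier])
  then have "(\<lambda>z. c * ?k z) integrable_on cbox 0 (a *\<^sub>R 1)"
    using integrable_on_cmult_left[OF k, of c] by simp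
  then have "integral (cbox 0 (a *\<^sub>R 1)) (\<lambda>z. f (x - z) * ?k z - c * ?k z)
      = integral (cbox 0 (a *\<^sub>R 1)) (\<lambda>z. f (x - z) * ?k z) - integral (cbox 0 (a *\<^sub>R 1)) (\<lambda>z. c * ?k z)"
    by (rule integral_diff[OF fk])
  also have "integral (cbox 0 (a *\<^sub>R 1)) (\<lambda>z. c * ?k z) = c * integral (cbox 0 (a *\<^sub>R 1)) ?k"
    by (rule integral_mult[OF k, symmetric])
  finally show ?thesis
    using integral_mollifier[OF a, where 'n='n] by (simp add: mollify_def box_conv_def left_diff_distrib)
qed

lemma mollify_tendsto:
  fixes f :: "real^'n::finite \<Rightarrow> real"
  assumes f: "continuous_on UNIV f" and a: "a \<longlonglongrightarrow> 0" "\<And>m. a m > 0"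
  shows "(\<lambda>m. mollify (a m) f x) \<longlonglongrightarrow> f x"
proof (rule LIMSEQ_I)
  fix r :: real assume r: "r > 0"
  obtain d where d: "d > 0" "\<And>y. dist y x < d \<Longrightarrow> dist (f y) (f x) < r/2"
    using f r unfolding continuous_on_eq_continuous_at[OF open_UNIV] continuous_at_eps_delta
    by (metis UNIV_I half_gt_zero)
  obtain N where N: "\<And>m. m \<ge> N \<Longrightarrow> norm (a m - 0) < d / CARD('n)"
    using LIMSEQ_D[OF a(1), of "d / CARD('n)"] d by auto
  have half: "\<bar>mollify (a m) (\<lambda>y. f y - f x) x\<bar> \<le> r/2" if m: "m \<ge> N" for m
  proof (rule mollify_abs_le[OF _ a(2)])
    show "continuous_on UNIV (\<lambda>y. f y - f x)" by (intro continuous_intros f)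
    fix z :: "real^'n" assume "z \<in> cbox 0 (a m *\<^sub>R 1)"
    moreover have "CARD('n) * a m < d" using N[OF m] a(2)[of m] by (simp add: field_simps)
    ultimately have "dist (x - z) x < d" using norm_le_in_cube by (fastforce simp: dist_norm)
    then show "\<bar>f (x - z) - f x\<bar> \<le> r/2" using d(2) by (simp add: dist_real_def less_imp_le)
  qed
  have "norm (mollify (a m) f x - f x) < r" if "m \<ge> N" for m
    using half[OF that] r by (simp add: mollify_minus_const[OF f a(2)])
  then show "\<exists>N. \<forall>m\<ge>N. norm (mollify (a m) f x - f x) < r" by blast
qed

section \<open>Approximation by test functions\<close>

lemma has_vector_derivative_zero_outside:
  fixes f :: "real^'n::finite \<Rightarrow> 'b::real_normed_vector"
  assumes K: "closed K" and f0: "\<And>y. y \<notin> K \<Longrightarrow> f y = 0" and x: "x \<notin> K"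
  shows "((\<lambda>t. f (x + t *\<^sub>R axis j 1)) has_vector_derivative 0) (at 0)"
proof -
  obtain r where r: "r > 0" "ball x r \<subseteq> - K"
    using K x open_contains_ball[of "- K"] by (auto simp: open_Compl)
  show ?thesis
  proof (rule has_vector_derivative_transform_within_open[OF has_vector_derivative_const open_ball])
    fix t :: real assume "t \<in> ball 0 r"
    then have "x + t *\<^sub>R axis j 1 \<in> ball x r"
      by (simp add: dist_norm)
    then show "0 = f (x + t *\<^sub>R axis j 1)" using r f0 by auto
  qed (use r in auto)
qed

lemma partial_eq_0_outside:
  fixes f :: "real^'n::finite \<Rightarrow> 'b::real_normed_vector"
  assumes "closed K" "\<And>y. y \<notin> K \<Longrightarrow> f y = 0" "x \<notin> K"
  shows "partial_exists j f x" "partial j f x = 0"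
proof -
  have "((\<lambda>t. f (x + t *\<^sub>R axis j 1)) has_vector_derivative 0) (at 0)"
    by (rule has_vector_derivative_zero_outside[OF assms])
  then show "partial_exists j f x" "partial j f x = 0"
    by (rule partial_from_vector_derivative)+
qed

lemma compact_upper_bound:
  fixes f :: "real^'n::finite \<Rightarrow> real"
  assumes "compact K" "continuous_on K f"
  obtains b where "b \<ge> 0" "\<And>x. x \<in> K \<Longrightarrow> f x \<le> b"
proof -
  have "bounded (f ` K)" by (intro compact_imp_bounded compact_continuous_image assms)
  then obtain b where "b > 0" "\<forall>y\<in>f ` K. norm y \<le> b" by (auto simp: bounded_pos)
  then show ?thesis using that[of b] by force
qed

lemma test_funD:
  assumes "test_fun \<Omega> f"
  shows "continuous_on \<Omega> f" "continuous_on \<Omega> (partial j f)" "x \<in> \<Omega> \<Longrightarrow> partial_exists j f x"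
    and "compact (closure {x. f x \<noteq> 0})" "closure {x. f x \<noteq> 0} \<subseteq> \<Omega>"
    and "x \<notin> closure {x. f x \<noteq> 0} \<Longrightarrow> f x = 0"
proof -
  have "(\<forall>j. \<forall>x\<in>\<Omega>. partial_exists j (iter_partial js f) x) \<and> continuous_on \<Omega> (iter_partial js f)" for js
    using assms unfolding test_fun_def smooth_on_def by blast
  from this[of "[]"] this[of "[j]"]
  show "continuous_on \<Omega> f" "continuous_on \<Omega> (partial j f)" "x \<in> \<Omega> \<Longrightarrow> partial_exists j f x"
    by simp_all
  show "compact (closure {x. f x \<noteq> 0})" "closure {x. f x \<noteq> 0} \<subseteq> \<Omega>"
    using assms unfolding test_fun_def by auto
  show "x \<notin> closure {x. f x \<noteq> 0} \<Longrightarrow> f x = 0"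
    using closure_subset[of "{x. f x \<noteq> 0}"] by auto
qed

lemma test_funI:
  assumes "smooth_on \<Omega> f" "compact K" "K \<subseteq> \<Omega>" "\<And>x. x \<notin> K \<Longrightarrow> f x = 0"
  shows "test_fun \<Omega> f"
proof -
  have "closure {x. f x \<noteq> 0} \<subseteq> K"
    using assms(4) compact_imp_closed[OF assms(2)] by (intro closure_minimal) auto
  moreover from this have "closure {x. f x \<noteq> 0} \<inter> K = closure {x. f x \<noteq> 0}"
    by blast
  ultimately show ?thesis
    unfolding test_fun_def using assms(1,3) closed_Int_compact[OF closed_closure assms(2), of "{x. f x \<noteq> 0}"]
    by auto
qed

lemma compact_cball_sums_subset_open:
  fixes K :: "'a::euclidean_space set"
  assumes "compact K" "open \<Omega>" "K \<subseteq> \<Omega>"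
  obtains r where "r > 0" "compact {x + y |x y. x \<in> K \<and> y \<in> cball 0 r}"
    "{x + y |x y. x \<in> K \<and> y \<in> cball 0 r} \<subseteq> \<Omega>"
proof -
  obtain \<delta> where \<delta>: "\<delta> > 0" "(\<Union>x\<in>K. ball x \<delta>) \<subseteq> \<Omega>"
    using compact_subset_open_imp_ball_epsilon_subset[OF assms] by blast
  have "{x + y |x y. x \<in> K \<and> y \<in> cball 0 (\<delta>/2)} \<subseteq> \<Omega>"
  proof safe
    fix x y :: 'a assume "x \<in> K" "y \<in> cball 0 (\<delta>/2)"
    then have "x + y \<in> ball x \<delta>" using \<delta> by (auto simp: dist_norm)
    with \<open>x \<in> K\<close> \<delta> show "x + y \<in> \<Omega>" by blast
  qed
  moreover have "compact {x + y |x y. x \<in> K \<and> y \<in> cball 0 (\<delta>/2)}"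
    by (intro compact_sums assms(1) compact_cball)
  ultimately show ?thesis using that[of "\<delta>/2"] \<delta>(1) by simp
qed

lemma bounded_C1_compact_support:
  fixes f :: "real^'n::finite \<Rightarrow> real"
  assumes f: "continuous_on UNIV f" "\<And>j. continuous_on UNIV (partial j f)"
    and K: "compact K" "\<And>x. x \<notin> K \<Longrightarrow> f x = 0" "\<And>j x. x \<notin> K \<Longrightarrow> partial j f x = 0"
  obtains B where "\<And>y. \<bar>f y\<bar> \<le> B" "\<And>j y. \<bar>partial j f y\<bar> \<le> B"
proof -
  define g where "g y = \<bar>f y\<bar> + (\<Sum>j\<in>UNIV. \<bar>partial j f y\<bar>)" for y
  have "continuous_on K g"
    unfolding g_def by (intro continuous_intros continuous_on_subset[OF f(1)] continuous_on_subset[OF f(2)]) auto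
  then obtain B where B: "B \<ge> 0" "\<And>y. y \<in> K \<Longrightarrow> g y \<le> B"
    using compact_upper_bound[OF K(1)] by blast
  have g: "g y \<le> B" for y
    using B K(2,3)[of y] by (cases "y \<in> K") (auto simp: g_def)
  show ?thesis
  proof (rule that)
    fix j y
    have "0 \<le> (\<Sum>j\<in>UNIV. \<bar>partial j f y\<bar>)" "\<bar>partial j f y\<bar> \<le> (\<Sum>j\<in>UNIV. \<bar>partial j f y\<bar>)"
      by (auto intro: sum_nonneg member_le_sum)
    then show "\<bar>f y\<bar> \<le> B" "\<bar>partial j f y\<bar> \<le> B"
      using g[of y] abs_ge_zero[of "f y"] unfolding g_def by linarith+
  qed
qed

lemma smooth_on_mollify:
  fixes f :: "real^'n::finite \<Rightarrow> real"
  assumes f: "continuous_on UNIV f" and K: "compact K" "\<And>x. x \<notin> K \<Longrightarrow> f x = 0"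
  shows "smooth_on S (mollify a f)"
proof -
  obtain lo hi :: "real^'n" where box: "K \<subseteq> cbox lo hi"
    using bounded_subset_cbox_symmetric[OF compact_imp_bounded[OF K(1)]] by metis
  have "box_conv lo hi (mollifier a (\<lambda>_. 0)) f = mollify a f"
    unfolding mollify_def
    by (intro ext box_conv_commute continuous_on_mollifier f mollifier_eq_0) (use box K(2) in blast)
  then show ?thesis using smooth_on_box_conv_mollifier[OF f] by metis
qed

lemma partial_mollify:
  fixes f :: "real^'n::finite \<Rightarrow> real"
  assumes f: "continuous_on UNIV f" "\<And>j x. partial_exists j f x" "\<And>j. continuous_on UNIV (partial j f)"
  shows "partial j (mollify a f) x = mollify a (partial j f) x"
proof -
  have "((\<lambda>t. f (x + t *\<^sub>R axis j 1)) has_real_derivative partial j f x) (at 0)" for x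
    using has_vector_derivative_partial[OF f(2)] by (simp add: has_real_derivative_iff_has_vector_derivative)
  then show ?thesis
    unfolding mollify_def
    by (intro partial_from_real_derivative(2) box_conv_has_partial f(1,3) continuous_on_mollifier)
qed

lemma mollify_eq_0_outside:
  fixes f :: "real^'n::finite \<Rightarrow> real" and a r :: real
  assumes f0: "\<And>y. y \<notin> K \<Longrightarrow> f y = 0" and x: "x \<notin> {y + z |y z. y \<in> K \<and> z \<in> cball 0 r}"
    and a: "CARD('n) * a \<le> r"
  shows "mollify a f x = 0"
proof -
  have "f (x - z) = 0" if "z \<in> cbox 0 (a *\<^sub>R 1)" for z
  proof -
    have "norm z \<le> r" using norm_le_in_cube[OF that] a by linarith
    then have "x - z \<notin> K" using x by force
    then show ?thesis by (rule f0)
  qed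
  then show ?thesis
    unfolding mollify_def box_conv_def by (subst integral_cong[where g="\<lambda>_. 0"]) auto
qed

lemma test_fun_approx_C1:
  fixes f :: "real^'n::finite \<Rightarrow> real"
  assumes \<Omega>: "open \<Omega>" and f: "continuous_on UNIV f"
    and Df: "\<And>j x. partial_exists j f x" "\<And>j. continuous_on UNIV (partial j f)"
    and K: "compact K" "K \<subseteq> \<Omega>" and f0: "\<And>x. x \<notin> K \<Longrightarrow> f x = 0"
  obtains K' and \<psi> :: "nat \<Rightarrow> real^'n \<Rightarrow> real" and B where
    "compact K'" "K' \<subseteq> \<Omega>" "\<And>m. test_fun \<Omega> (\<psi> m)" "\<And>m x. x \<notin> K' \<Longrightarrow> \<psi> m x = 0"
    "\<And>m x. \<bar>\<psi> m x\<bar> \<le> B" "\<And>m j x. \<bar>partial j (\<psi> m) x\<bar> \<le> B"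
    "\<And>x. (\<lambda>m. \<psi> m x) \<longlonglongrightarrow> f x" "\<And>j x. (\<lambda>m. partial j (\<psi> m) x) \<longlonglongrightarrow> partial j f x"
proof -
  obtain r where r: "r > 0" and K': "compact {x + y |x y. x \<in> K \<and> y \<in> cball 0 r}"
    "{x + y |x y. x \<in> K \<and> y \<in> cball 0 r} \<subseteq> \<Omega>"
    using compact_cball_sums_subset_open[OF K(1) \<Omega> K(2)] by blast
  have Df0: "partial j f x = 0" if "x \<notin> K" for j x
    using partial_eq_0_outside(2)[OF compact_imp_closed[OF K(1)] f0 that] .
  obtain B where fB: "\<And>y. \<bar>f y\<bar> \<le> B" and DfB: "\<And>j y. \<bar>partial j f y\<bar> \<le> B"
    using bounded_C1_compact_support[OF f Df(2) K(1) f0 Df0] by blast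
  define a where "a m = r / (CARD('n) * (real m + 1))" for m
  have a_pos: "a m > 0" for m using r by (simp add: a_def)
  have a_small: "CARD('n) * a m \<le> r" for m
  proof -
    have "CARD('n) * a m = r / (real m + 1)" by (simp add: a_def)
    also have "\<dots> \<le> r" using r by (simp add: field_simps)
    finally show ?thesis .
  qed
  have "(\<lambda>m. (r / CARD('n)) * inverse (real m + 1)) \<longlonglongrightarrow> (r / CARD('n)) * 0"
    by (intro tendsto_mult tendsto_const) (use LIMSEQ_inverse_real_of_nat in \<open>simp add: add.commute\<close>)
  then have a_lim: "a \<longlonglongrightarrow> 0" by (simp add: a_def[abs_def] field_simps)
  have zero: "mollify (a m) f x = 0" if "x \<notin> {x + y |x y. x \<in> K \<and> y \<in> cball 0 r}" for m x
    by (rule mollify_eq_0_outside[OF f0 that a_small])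
  show ?thesis
  proof (rule that[OF K' _ zero])
    show "test_fun \<Omega> (mollify (a m) f)" for m
      by (rule test_funI[OF smooth_on_mollify[OF f K(1) f0] K' zero])
  qed (auto simp: partial_mollify[OF f Df] intro: mollify_bound[OF f fB a_pos] mollify_bound[OF Df(2) DfB a_pos]
      mollify_tendsto[OF f a_lim a_pos] mollify_tendsto[OF Df(2) a_lim a_pos])
qed

section \<open>Calculus of the Picone quotient\<close>

lemma has_real_derivative_norm_powr_nonzero:
  fixes v :: "real \<Rightarrow> complex"
  assumes v: "(v has_vector_derivative v') (at s)" and v0: "v s \<noteq> 0"
  shows "((\<lambda>t. cmod (v t) powr p) has_real_derivative p * cmod (v s) powr (p - 2) * Re (cnj (v s) * v')) (at s)"
proof -
  define S where "S t = (Re (v t))\<^sup>2 + (Im (v t))\<^sup>2" for t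
  have S: "cmod (v t) powr q = S t powr (q/2)" for t q
  proof -
    have "cmod (v t) powr q = (cmod (v t) powr 2) powr (q/2)" by (subst powr_powr) simp
    also have "cmod (v t) powr 2 = S t" by (simp add: S_def cmod_power2 powr_realpow')
    finally show ?thesis .
  qed
  have "S s > 0" using v0 by (simp add: S_def cmod_power2[symmetric])
  moreover have "(S has_real_derivative 2 * Re (v s) * Re v' + 2 * Im (v s) * Im v') (at s)"
    unfolding S_def by (auto intro!: derivative_eq_intros v)
  ultimately have "((\<lambda>t. S t powr (p/2)) has_real_derivative
      (p/2) * S s powr (p/2 - 1) * (2 * Re (v s) * Re v' + 2 * Im (v s) * Im v')) (at s)"
    by (intro DERIV_chain2[OF has_real_derivative_powr])
  moreover have "S s powr (p/2 - 1) = cmod (v s) powr (p - 2)"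
    using S[of s "p - 2"] by (simp add: diff_divide_distrib)
  ultimately show ?thesis unfolding S by (simp add: algebra_simps)
qed

text \<open>At a zero of \<open>v\<close> we have \<open>|v(s + h)| \<le> o(h) + |h| |v'|\<close>, so \<open>|v(s + h)|\<^sup>p = o(h)\<close> since \<open>p > 1\<close>.\<close>

lemma has_real_derivative_norm_powr_zero:
  fixes v :: "real \<Rightarrow> complex"
  assumes p: "p > 1" and v: "(v has_vector_derivative v') (at s)" and v0: "v s = 0"
  shows "((\<lambda>t. cmod (v t) powr p) has_real_derivative 0) (at s)"
  unfolding has_field_derivative_def has_derivative_at
proof (intro conjI)
  show "bounded_linear ((*) 0 :: real \<Rightarrow> real)" by (rule bounded_linear_mult_right)
  define r where "r h = cmod (v (s + h) - v s - h *\<^sub>R v') / \<bar>h\<bar>" for h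
  have "r \<midarrow>0\<rightarrow> 0"
    using v unfolding has_vector_derivative_def has_derivative_at r_def by simp
  moreover have "r h \<ge> 0" for h by (simp add: r_def)
  ultimately have lim: "(\<lambda>h. (r h + cmod v') powr p * \<bar>h\<bar> powr (p - 1)) \<midarrow>0\<rightarrow> (0 + cmod v') powr p * 0 powr (p - 1)"
    using p by (intro tendsto_intros tendsto_rabs_zero tendsto_ident_at) (auto intro: always_eventually)
  have "norm (cmod (v (s + h)) powr p / \<bar>h\<bar>) \<le> (r h + cmod v') powr p * \<bar>h\<bar> powr (p - 1)" if h: "h \<noteq> 0" for h
  proof -
    have "cmod (v (s + h)) \<le> cmod (v (s + h) - v s - h *\<^sub>R v') + \<bar>h\<bar> * cmod v'"
      using v0 norm_triangle_ineq[of "v (s + h) - h *\<^sub>R v'" "h *\<^sub>R v'"] by simp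
    then have "cmod (v (s + h)) / \<bar>h\<bar> \<le> r h + cmod v'"
      using h by (simp add: r_def field_simps)
    then have "(cmod (v (s + h)) / \<bar>h\<bar>) powr p \<le> (r h + cmod v') powr p"
      using p by (intro powr_mono2) auto
    moreover have "cmod (v (s + h)) powr p / \<bar>h\<bar> = (cmod (v (s + h)) / \<bar>h\<bar>) powr p * \<bar>h\<bar> powr (p - 1)"
      using h by (simp add: powr_divide powr_diff)
    ultimately show ?thesis by (simp add: mult_right_mono)
  qed
  then have "(\<lambda>h. cmod (v (s + h)) powr p / \<bar>h\<bar>) \<midarrow>0\<rightarrow> 0"
    using p by (intro Lim_null_comparison[OF _ lim[simplified]]) (auto simp: eventually_at_filter)
  then show "(\<lambda>h. norm (cmod (v (s + h)) powr p - cmod (v s) powr p - 0 * h) / norm h) \<midarrow>0\<rightarrow> 0"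
    using v0 p by simp
qed

lemma has_real_derivative_norm_powr:
  fixes v :: "real \<Rightarrow> complex"
  assumes p: "p > 1" and v: "(v has_vector_derivative v') (at s)"
  shows "((\<lambda>t. cmod (v t) powr p) has_real_derivative p * cmod (v s) powr (p - 2) * Re (cnj (v s) * v')) (at s)"
  using has_real_derivative_norm_powr_nonzero[OF v] has_real_derivative_norm_powr_zero[OF p v]
  by (cases "v s = 0") auto

lemma continuous_on_norm_powr_mult_Re_cnj:
  fixes u U :: "'a::topological_space \<Rightarrow> complex"
  assumes p: "p > 1" and u: "continuous_on S u" and U: "continuous_on S U"
  shows "continuous_on S (\<lambda>x. cmod (u x) powr (p - 2) * Re (cnj (u x) * U x))"
  unfolding continuous_on_def
proof
  fix x assume x: "x \<in> S"
  have ut: "(u \<longlongrightarrow> u x) (at x within S)" and Ut: "(U \<longlongrightarrow> U x) (at x within S)"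
    using u U x by (auto simp: continuous_on_def)
  show "((\<lambda>x. cmod (u x) powr (p - 2) * Re (cnj (u x) * U x)) \<longlongrightarrow> cmod (u x) powr (p - 2) * Re (cnj (u x) * U x)) (at x within S)"
  proof (cases "u x = 0")
    case False
    then show ?thesis by (intro tendsto_intros ut Ut) auto
  next
    case True
    have lim: "((\<lambda>y. cmod (u y) powr (p - 1) * cmod (U y)) \<longlongrightarrow> cmod (u x) powr (p - 1) * cmod (U x)) (at x within S)"
      using p by (intro tendsto_intros ut Ut) auto
    have "((\<lambda>y. cmod (u y) powr (p - 2) * Re (cnj (u y) * U y)) \<longlongrightarrow> 0) (at x within S)"
    proof (rule Lim_null_comparison[OF always_eventually])
      show "\<forall>y. norm (cmod (u y) powr (p - 2) * Re (cnj (u y) * U y)) \<le> cmod (u y) powr (p - 1) * cmod (U y)"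
      proof
        fix y
        have "norm (cmod (u y) powr (p - 2) * Re (cnj (u y) * U y)) \<le> cmod (u y) powr (p - 2) * (cmod (u y) * cmod (U y))"
          using abs_Re_le_cmod[of "cnj (u y) * U y"] by (simp add: abs_mult norm_mult mult_left_mono)
        also have "\<dots> = (cmod (u y) * cmod (u y) powr (p - 2)) * cmod (U y)" by simp
        also have "cmod (u y) * cmod (u y) powr (p - 2) = cmod (u y) powr (p - 1)"
          by (subst powr_mult_base) auto
        finally show "norm (cmod (u y) powr (p - 2) * Re (cnj (u y) * U y)) \<le> cmod (u y) powr (p - 1) * cmod (U y)" .
      qed
      show "((\<lambda>y. cmod (u y) powr (p - 1) * cmod (U y)) \<longlongrightarrow> 0) (at x within S)"
        using lim True by simp
    qed
    then show ?thesis using True by simp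
  qed
qed

lemma continuous_on_UNIV_zero_outside:
  fixes f :: "real^'n::finite \<Rightarrow> 'b::real_normed_vector"
  assumes \<Omega>: "open \<Omega>" and f: "continuous_on \<Omega> f" and K: "closed K" "K \<subseteq> \<Omega>"
    and z: "\<And>x. x \<notin> K \<Longrightarrow> f x = 0"
  shows "continuous_on UNIV f"
proof -
  have "isCont f x" for x
  proof (cases "x \<in> \<Omega>")
    case True
    then show ?thesis using continuous_on_eq_continuous_at[OF \<Omega>] f by blast
  next
    case False
    then have xK: "x \<in> - K" using K by auto
    have "continuous_on (- K) f"
      by (rule continuous_on_cong[THEN iffD1, OF refl _ continuous_on_const[of _ 0]]) (use z in auto)
    then show ?thesis using continuous_on_eq_continuous_at[of "- K" f] K xK by (auto simp: open_Compl)
  qed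
  then show ?thesis by (simp add: continuous_at_imp_continuous_on)
qed

lemma has_real_derivative_mult_abs_powr:
  fixes g :: "real \<Rightarrow> real"
  assumes g: "(g has_real_derivative d) (at s)" and gs: "g s \<noteq> 0"
  shows "((\<lambda>t. g t * \<bar>g t\<bar> powr (- p)) has_real_derivative (1 - p) * \<bar>g s\<bar> powr (- p) * d) (at s)"
proof -
  have eq: "\<bar>y\<bar> powr (- p) = (y\<^sup>2) powr (- p / 2)" for y :: real
  proof -
    have "(y\<^sup>2) powr (- p / 2) = (\<bar>y\<bar> powr 2) powr (- p / 2)" by (simp add: powr_realpow')
    also have "\<dots> = \<bar>y\<bar> powr (- p)" by (subst powr_powr) simp
    finally show ?thesis by simp
  qed
  have pos: "(g s)\<^sup>2 > 0" using gs by simp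
  have d2: "((\<lambda>t. (g t)\<^sup>2) has_real_derivative 2 * g s * d) (at s)"
    by (auto intro!: derivative_eq_intros g)
  have d3: "((\<lambda>t. ((g t)\<^sup>2) powr (- p / 2)) has_real_derivative (- p / 2) * ((g s)\<^sup>2) powr (- p / 2 - 1) * (2 * g s * d)) (at s)"
    using DERIV_chain2[where f="\<lambda>z. z powr (- p / 2)", OF has_real_derivative_powr[OF pos, of "- p / 2"] d2] by simp
  have D1: "((\<lambda>t. g t * ((g t)\<^sup>2) powr (- p / 2)) has_real_derivative
      d * ((g s)\<^sup>2) powr (- p / 2) + g s * ((- p / 2) * ((g s)\<^sup>2) powr (- p / 2 - 1) * (2 * g s * d))) (at s)"
    by (rule DERIV_mult[OF g d3, THEN DERIV_cong]) (simp add: algebra_simps)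
  have AB: "(g s)\<^sup>2 * ((g s)\<^sup>2) powr (- p / 2 - 1) = ((g s)\<^sup>2) powr (- p / 2)"
    using pos by (subst powr_mult_base) auto
  have E: "g s * ((- p / 2) * ((g s)\<^sup>2) powr (- p / 2 - 1) * (2 * g s * d)) = - p * d * ((g s)\<^sup>2 * ((g s)\<^sup>2) powr (- p / 2 - 1))"
    by (simp add: power2_eq_square algebra_simps)
  have E2: "d * ((g s)\<^sup>2) powr (- p / 2) + g s * ((- p / 2) * ((g s)\<^sup>2) powr (- p / 2 - 1) * (2 * g s * d))
      = (1 - p) * ((g s)\<^sup>2) powr (- p / 2) * d"
    unfolding E AB by (simp add: algebra_simps)
  have "((\<lambda>t. g t * ((g t)\<^sup>2) powr (- p / 2)) has_real_derivative
      (1 - p) * ((g s)\<^sup>2) powr (- p / 2) * d) (at s)"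
    using D1 unfolding E2 .
  then show ?thesis unfolding eq .
qed

lemma has_vector_derivative_divide_of_real:
  fixes v :: "real \<Rightarrow> complex" and g :: "real \<Rightarrow> real"
  assumes v: "(v has_vector_derivative v') (at s)" and g: "(g has_real_derivative d) (at s)" and gs: "g s \<noteq> 0"
  shows "((\<lambda>t. v t / complex_of_real (g t)) has_vector_derivative
     (v' * complex_of_real (g s) - v s * complex_of_real d) / complex_of_real ((g s)\<^sup>2)) (at s)"
proof -
  have "((\<lambda>t. inverse (g t) *\<^sub>R v t) has_vector_derivative
      inverse (g s) *\<^sub>R v' + (- (inverse (g s) * d * inverse (g s))) *\<^sub>R v s) (at s)"
  proof (intro has_vector_derivative_scaleR v)
    show "((\<lambda>x. inverse (g x)) has_real_derivative - (inverse (g s) * d * inverse (g s))) (at s)"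
      by (rule DERIV_inverse_fun[OF g gs, THEN DERIV_cong]) (simp add: power2_eq_square field_simps)
  qed
  moreover have "(\<lambda>t. inverse (g t) *\<^sub>R v t) = (\<lambda>t. v t / complex_of_real (g t))"
    by (rule ext) (simp add: scaleR_conv_of_real divide_inverse mult.commute)
  moreover have "inverse (g s) *\<^sub>R v' + (- (inverse (g s) * d * inverse (g s))) *\<^sub>R v s
      = (v' * complex_of_real (g s) - v s * complex_of_real d) / complex_of_real ((g s)\<^sup>2)"
  proof -
    have gs': "complex_of_real (g s) \<noteq> 0" using gs by simp
    show ?thesis using gs' unfolding scaleR_conv_of_real
      by (simp add: divide_simps power2_eq_square)
  qed
  ultimately show ?thesis by simp
qed

lemma powr_eq_powr_minus_2_mult_square:
  assumes "0 \<le> (x::real)"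
  shows "x powr p = x powr (p - 2) * x\<^sup>2"
proof -
  have "x powr p = x powr (p - 2) * x powr 2" by (simp flip: powr_add)
  then show ?thesis using assms by (simp add: powr_realpow')
qed

lemma Re_mult_cnj_Picone:
  fixes a d \<phi> :: real and u g :: complex
  assumes "\<phi> \<noteq> 0"
  shows "Re ((of_real a * u * of_real d / of_real \<phi>) *
      cnj (of_real (a * \<phi>) * ((g * of_real \<phi> - u * of_real d) / of_real (\<phi>\<^sup>2))))
    = a\<^sup>2 * d / \<phi>\<^sup>2 * (\<phi> * Re (u * cnj g) - d * (cmod u)\<^sup>2)"
proof -
  obtain x y where u: "u = Complex x y" by (cases u)
  obtain x' y' where g: "g = Complex x' y'" by (cases g)
  show ?thesis using assms unfolding cmod_power2 u g
    by (simp add: field_simps power2_eq_square)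
qed

lemma Picone_remainder:
  fixes a d \<phi> p :: real and u g :: complex
  assumes a0: "a \<ge> 0" and \<phi>: "\<phi> \<noteq> 0"
  defines "r \<equiv> of_real a * u * of_real d / of_real \<phi>"
  shows "cmod r powr p + p * cmod r powr (p - 2) *
           Re (r * cnj (of_real (a * \<phi>) * ((g * of_real \<phi> - u * of_real d) / of_real (\<phi>\<^sup>2))))
       = a powr p * \<bar>d\<bar> powr (p - 2) * d *
           ((p * cmod u powr (p - 2) * Re (cnj u * g)) * (\<phi> * \<bar>\<phi>\<bar> powr (- p))
            + cmod u powr p * ((1 - p) * \<bar>\<phi>\<bar> powr (- p) * d))"
proof (cases "a = 0 \<or> u = 0 \<or> d = 0")
  case True
  then show ?thesis by (auto simp: r_def)
next
  case False
  then have "a > 0" using a0 by auto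
  define A where "A = a powr (p - 2)"
  define U where "U = cmod u powr (p - 2)"
  define D where "D = \<bar>d\<bar> powr (p - 2)"
  define F where "F = \<bar>\<phi>\<bar> powr (p - 2)"
  have "F > 0" using \<phi> by (simp add: F_def)
  have a_eq: "a powr p = A * a\<^sup>2"
    unfolding A_def by (rule powr_eq_powr_minus_2_mult_square[OF a0])
  have u_eq: "cmod u powr p = U * (cmod u)\<^sup>2"
    unfolding U_def by (rule powr_eq_powr_minus_2_mult_square) simp
  have d_eq: "\<bar>d\<bar> powr p = D * d\<^sup>2"
    unfolding D_def by (subst powr_eq_powr_minus_2_mult_square) simp_all
  have \<phi>_eq': "\<bar>\<phi>\<bar> powr p = F * \<phi>\<^sup>2"
    unfolding F_def by (subst powr_eq_powr_minus_2_mult_square) simp_all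
  then have \<phi>_eq: "\<bar>\<phi>\<bar> powr (- p) = 1 / (F * \<phi>\<^sup>2)"
    by (simp add: powr_minus divide_inverse)
  have nr: "cmod r = a * cmod u * \<bar>d\<bar> / \<bar>\<phi>\<bar>"
    unfolding r_def using a0 by (simp add: norm_mult norm_divide)
  have n1: "cmod r powr p = A * a\<^sup>2 * (U * (cmod u)\<^sup>2) * (D * d\<^sup>2) / (F * \<phi>\<^sup>2)"
    unfolding nr using a0 by (simp add: powr_mult powr_divide a_eq u_eq d_eq \<phi>_eq')
  have n2: "cmod r powr (p - 2) = A * U * D / F"
    unfolding nr using a0 by (simp add: powr_mult powr_divide A_def U_def D_def F_def)
  have "Re (cnj u * g) = Re (u * cnj g)"
    by (simp add: algebra_simps)
  then show ?thesis
    unfolding n1 n2 unfolding r_def Re_mult_cnj_Picone[OF \<phi>] \<phi>_eq u_eq a_eq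
    apply (simp only: D_def[symmetric] U_def[symmetric])
    using \<phi> \<open>F > 0\<close> by (simp add: field_simps power2_eq_square)
qed

text \<open>The two arguments of \<open>Cp\<close> differ by \<open>V\<^sup>1\<^sup>/\<^sup>p u d / \<phi>\<close>.\<close>

lemma Cp_Picone_identity:
  fixes V \<phi> d p :: real and u g :: complex
  assumes p: "p > 1" and V: "V \<ge> 0" and \<phi>: "\<phi> \<noteq> 0"
  shows "Cp p (of_real (V powr (1/p)) * g)
           (of_real (V powr (1/p) * \<phi>) * ((g * of_real \<phi> - u * of_real d) / of_real (\<phi>\<^sup>2)))
       = V * cmod g powr p - V * \<bar>d\<bar> powr (p - 2) * d *
           ((p * cmod u powr (p - 2) * Re (cnj u * g)) * (\<phi> * \<bar>\<phi>\<bar> powr (- p))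
            + cmod u powr p * ((1 - p) * \<bar>\<phi>\<bar> powr (- p) * d))"
proof -
  define a where "a = V powr (1/p)"
  have a0: "a \<ge> 0" by (simp add: a_def)
  have aV: "a powr p = V" using V p unfolding a_def by (subst powr_powr) simp
  define \<eta> where "\<eta> = of_real (a * \<phi>) * ((g * of_real \<phi> - u * of_real d) / of_real (\<phi>\<^sup>2))"
  have diff: "of_real a * g - \<eta> = of_real a * u * of_real d / of_real \<phi>"
    using \<phi> unfolding \<eta>_def by (simp add: field_simps power2_eq_square)
  have "cmod (of_real a * g) powr p = V * cmod g powr p"
    using a0 by (simp add: norm_mult powr_mult aV)
  then have "Cp p (of_real a * g) \<eta> = V * cmod g powr p -
      (cmod (of_real a * u * of_real d / of_real \<phi>) powr p + p * cmod (of_real a * u * of_real d / of_real \<phi>) powr (p - 2) *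
         Re (of_real a * u * of_real d / of_real \<phi> * cnj \<eta>))"
    unfolding Cp_def diff by simp
  also have "\<dots> = V * cmod g powr p - V * \<bar>d\<bar> powr (p - 2) * d *
           ((p * cmod u powr (p - 2) * Re (cnj u * g)) * (\<phi> * \<bar>\<phi>\<bar> powr (- p))
            + cmod u powr p * ((1 - p) * \<bar>\<phi>\<bar> powr (- p) * d))"
    unfolding \<eta>_def Picone_remainder[OF a0 \<phi>] aV ..
  finally show ?thesis by (simp add: a_def \<eta>_def)
qed

section \<open>Horizontal derivatives and integrability\<close>

lemma hdotZ_eq_sum_partial:
  "hdotZ \<sigma> Z f x = (\<Sum>j\<in>UNIV. (\<Sum>i\<in>UNIV. Z x $ i * \<sigma> x $ i $ j) *\<^sub>R partial j f x)"
proof -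
  have "hdotZ \<sigma> Z f x = (\<Sum>i\<in>UNIV. \<Sum>j\<in>UNIV. (Z x $ i * \<sigma> x $ i $ j) *\<^sub>R partial j f x)"
    unfolding hdotZ_def hgrad_def by (simp add: scaleR_sum_right)
  also have "\<dots> = (\<Sum>j\<in>UNIV. (\<Sum>i\<in>UNIV. Z x $ i * \<sigma> x $ i $ j) *\<^sub>R partial j f x)"
    by (subst sum.swap) (simp add: scaleR_sum_left)
  finally show ?thesis .
qed

lemma norm_hdotZ_le:
  "norm (hdotZ \<sigma> Z f x)
     \<le> norm (Z x) * (\<Sum>j\<in>UNIV. \<Sum>i\<in>UNIV. \<bar>\<sigma> x $ i $ j\<bar>) * (\<Sum>j\<in>UNIV. norm (partial j f x))"
proof -
  let ?S = "\<Sum>j\<in>UNIV. \<Sum>i\<in>UNIV. \<bar>\<sigma> x $ i $ j\<bar>"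
  have coeff: "\<bar>\<Sum>i\<in>UNIV. Z x $ i * \<sigma> x $ i $ j\<bar> \<le> norm (Z x) * ?S" for j
  proof -
    have "\<bar>\<Sum>i\<in>UNIV. Z x $ i * \<sigma> x $ i $ j\<bar> \<le> (\<Sum>i\<in>UNIV. norm (Z x) * \<bar>\<sigma> x $ i $ j\<bar>)"
      by (rule order_trans[OF sum_abs], rule sum_mono)
         (simp add: abs_mult mult_right_mono component_le_norm_cart)
    also have "\<dots> = norm (Z x) * (\<Sum>i\<in>UNIV. \<bar>\<sigma> x $ i $ j\<bar>)"
      by (simp add: sum_distrib_left)
    also have "\<dots> \<le> norm (Z x) * ?S"
      by (intro mult_left_mono member_le_sum) (auto intro: sum_nonneg)
    finally show ?thesis .
  qed
  have "norm (hdotZ \<sigma> Z f x) \<le> (\<Sum>j\<in>UNIV. \<bar>\<Sum>i\<in>UNIV. Z x $ i * \<sigma> x $ i $ j\<bar> * norm (partial j f x))"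
    unfolding hdotZ_eq_sum_partial by (rule order_trans[OF norm_sum]) simp
  also have "\<dots> \<le> (\<Sum>j\<in>UNIV. norm (Z x) * ?S * norm (partial j f x))"
    by (intro sum_mono mult_right_mono coeff) simp
  finally show ?thesis by (simp add: sum_distrib_left)
qed

lemma borel_measurable_hdotZ:
  fixes f :: "real^'n::finite \<Rightarrow> 'b::{real_normed_vector, second_countable_topology}"
  assumes S: "S \<in> sets lebesgue" and Z: "Z \<in> borel_measurable (lebesgue_on S)"
    and \<sigma>: "\<And>i j. continuous_on UNIV (\<lambda>x. \<sigma> x $ i $ j)" and f: "\<And>j. continuous_on S (partial j f)"
  shows "hdotZ \<sigma> Z f \<in> borel_measurable (lebesgue_on S)"
proof -
  have "(\<lambda>x. Z x $ i) \<in> borel_measurable (lebesgue_on S)" for i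
    by (rule measurable_compose[OF Z borel_measurable_nth])
  moreover have "(\<lambda>x. \<sigma> x $ i $ j) \<in> borel_measurable (lebesgue_on S)" for i j
    by (rule continuous_imp_measurable_on_sets_lebesgue[OF continuous_on_subset[OF \<sigma>] S]) simp
  moreover have "partial j f \<in> borel_measurable (lebesgue_on S)" for j
    by (rule continuous_imp_measurable_on_sets_lebesgue[OF f S])
  ultimately show ?thesis
    unfolding hdotZ_eq_sum_partial[abs_def]
    by (intro borel_measurable_sum borel_measurable_scaleR borel_measurable_times) auto
qed

lemma integrable_lebesgue_on_indicator:
  fixes f :: "real^'n::finite \<Rightarrow> real"
  assumes "loc_integrable \<Omega> f" "compact K" "K \<subseteq> \<Omega>" "\<Omega> \<in> sets lebesgue"
  shows "integrable (lebesgue_on \<Omega>) (\<lambda>x. indicator K x * f x)"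
proof -
  have "(\<lambda>x. indicator \<Omega> x *\<^sub>R (indicator K x * f x)) = (\<lambda>x. indicator K x *\<^sub>R f x)"
    using assms(3) by (auto simp: indicator_def fun_eq_iff)
  moreover have "set_integrable lebesgue K f"
    using assms(1-3) unfolding loc_integrable_def by blast
  ultimately show ?thesis
    using assms(4) by (simp add: integrable_restrict_space set_integrable_def)
qed

lemma dominated_convergence_lebesgue_on:
  fixes f :: "nat \<Rightarrow> real^'n::finite \<Rightarrow> real"
  assumes "\<And>m. f m \<in> borel_measurable (lebesgue_on S)" "integrable (lebesgue_on S) g"
    and "\<And>m x. x \<in> S \<Longrightarrow> \<bar>f m x\<bar> \<le> g x" and "\<And>x. x \<in> S \<Longrightarrow> (\<lambda>m. f m x) \<longlonglongrightarrow> F x"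
  shows "integrable (lebesgue_on S) F"
    and "(\<lambda>m. integral\<^sup>L (lebesgue_on S) (f m)) \<longlonglongrightarrow> integral\<^sup>L (lebesgue_on S) F"
proof -
  have F: "F \<in> borel_measurable (lebesgue_on S)"
    by (rule borel_measurable_LIMSEQ_real[where u=f]) (use assms(1,4) in auto)
  have lim: "AE x in lebesgue_on S. (\<lambda>m. f m x) \<longlonglongrightarrow> F x"
    by (rule AE_I2) (use assms(4) in auto)
  have bound: "AE x in lebesgue_on S. norm (f m x) \<le> g x" for m
    by (rule AE_I2) (use assms(3) in auto)
  show "integrable (lebesgue_on S) F"
    by (rule integrable_dominated_convergence[OF F assms(1,2) lim bound])
  show "(\<lambda>m. integral\<^sup>L (lebesgue_on S) (f m)) \<longlonglongrightarrow> integral\<^sup>L (lebesgue_on S) F"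
    by (rule integral_dominated_convergence[OF F assms(1,2) lim bound])
qed

lemma integrable_lebesgue_on_bound:
  fixes f g :: "real^'n::finite \<Rightarrow> real"
  assumes "integrable (lebesgue_on S) g" "f \<in> borel_measurable (lebesgue_on S)"
    and "\<And>x. x \<in> S \<Longrightarrow> \<bar>f x\<bar> \<le> g x"
  shows "integrable (lebesgue_on S) f"
  using assms(3) by (intro Bochner_Integration.integrable_bound[OF assms(1,2)] AE_I2) force

lemma set_integral_eq_integral_lebesgue_on:
  fixes f :: "real^'n::finite \<Rightarrow> real"
  assumes "S \<in> sets lebesgue"
  shows "(LINT x:S|lebesgue. f x) = integral\<^sup>L (lebesgue_on S) f"
  using assms by (simp add: set_lebesgue_integral_def integral_restrict_space)

lemma sum_mult_Re_cnj_distrib: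
  fixes c d :: "'j \<Rightarrow> real" and U :: "'j \<Rightarrow> complex" and w :: complex and P Q N k :: real
  shows "(\<Sum>j\<in>A. c j * (P * Re (cnj w * U j) * Q + N * (k * d j)))
     = P * Re (cnj w * (\<Sum>j\<in>A. c j *\<^sub>R U j)) * Q + N * (k * (\<Sum>j\<in>A. c j * d j))"
  by (simp add: scaleR_conv_of_real sum_distrib_left sum_distrib_right sum.distrib algebra_simps)

lemma abs_powr_mult_le:
  fixes V g h z b c p :: real
  assumes p: "p > 1" and "V \<ge> 0" "z \<ge> 0" "b \<ge> 0" and g: "\<bar>g\<bar> \<le> z * b" and h: "\<bar>h\<bar> \<le> z * c"
  shows "\<bar>V * \<bar>g\<bar> powr (p - 2) * g * h\<bar> \<le> b powr (p - 1) * c * (V * z powr p)"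
proof -
  have "\<bar>V * \<bar>g\<bar> powr (p - 2) * g * h\<bar> = V * (\<bar>g\<bar> * \<bar>g\<bar> powr (p - 2)) * \<bar>h\<bar>"
    using assms by (simp add: abs_mult algebra_simps)
  also have "\<bar>g\<bar> * \<bar>g\<bar> powr (p - 2) = \<bar>g\<bar> powr (p - 1)"
    by (subst powr_mult_base) auto
  also have "V * \<bar>g\<bar> powr (p - 1) * \<bar>h\<bar> \<le> V * (z * b) powr (p - 1) * (z * c)"
    using assms by (intro mult_mono mult_left_mono powr_mono2) auto
  also have "z * z powr (p - 1) = z powr p"
    using assms by (subst powr_mult_base) auto
  then have "V * (z * b) powr (p - 1) * (z * c) = b powr (p - 1) * c * (V * z powr p)"
    using assms by (simp add: powr_mult algebra_simps flip: \<open>z * z powr (p - 1) = z powr p\<close>)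
  finally show ?thesis .
qed

section \<open>Weak solutions tested against compactly supported \<open>C\<^sup>1\<close> functions\<close>

locale weak_solution =
  fixes p :: real and \<Omega> :: "(real^'n::finite) set"
    and \<sigma> :: "real^'n \<Rightarrow> real^'n^'l::finite"
    and Z :: "real^'n \<Rightarrow> real^'l" and V W :: "real^'n \<Rightarrow> real"
    and lam :: real and \<phi> :: "real^'n \<Rightarrow> real"
  assumes sigma_cont: "\<And>i j. continuous_on UNIV (\<lambda>x. \<sigma> x $ i $ j)"
    and p: "1 < p"
    and \<Omega>: "open \<Omega>"
    and Z_meas: "Z \<in> borel_measurable (lebesgue_on \<Omega>)"
    and V_meas: "V \<in> borel_measurable (lebesgue_on \<Omega>)"
    and V_nonneg: "\<And>x. x \<in> \<Omega> \<Longrightarrow> V x \<ge> 0"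
    and W_loc: "loc_integrable \<Omega> W"
    and VZ_loc: "loc_integrable \<Omega> (\<lambda>x. V x * norm (Z x) powr p)"
    and phi_C1: "C1_on \<Omega> \<phi>"
    and phi_nz: "\<And>x. x \<in> \<Omega> \<Longrightarrow> \<phi> x \<noteq> 0"
    and phi_sol: "\<And>\<psi> :: real^'n \<Rightarrow> real. test_fun \<Omega> \<psi> \<Longrightarrow>
        (LINT x:\<Omega>|lebesgue. V x * \<bar>hdotZ \<sigma> Z \<phi> x\<bar> powr (p - 2) * hdotZ \<sigma> Z \<phi> x * hdotZ \<sigma> Z \<psi> x)
        = lam * (LINT x:\<Omega>|lebesgue. W x * \<bar>\<phi> x\<bar> powr (p - 2) * \<phi> x * \<psi> x)"
begin

definition flux :: "real^'n \<Rightarrow> real" where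
  "flux x = V x * \<bar>hdotZ \<sigma> Z \<phi> x\<bar> powr (p - 2) * hdotZ \<sigma> Z \<phi> x"

definition source :: "real^'n \<Rightarrow> real" where
  "source x = W x * \<bar>\<phi> x\<bar> powr (p - 2) * \<phi> x"

lemma \<Omega>_lebesgue: "\<Omega> \<in> sets lebesgue"
  using \<Omega> by (metis borel_open sets_completionI_sets sets_lborel)

lemma phi_continuous: "continuous_on \<Omega> \<phi>"
  and phi_partial_exists: "x \<in> \<Omega> \<Longrightarrow> partial_exists j \<phi> x"
  and phi_partial_continuous: "continuous_on \<Omega> (partial j \<phi>)"
  using phi_C1 unfolding C1_on_def by auto

lemma borel_measurable_hdotZ_\<Omega>:
  fixes f :: "real^'n \<Rightarrow> 'b::{real_normed_vector, second_countable_topology}"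
  shows "(\<And>j. continuous_on \<Omega> (partial j f)) \<Longrightarrow> hdotZ \<sigma> Z f \<in> borel_measurable (lebesgue_on \<Omega>)"
  by (rule borel_measurable_hdotZ[OF \<Omega>_lebesgue Z_meas sigma_cont])

lemma weak_equation:
  "test_fun \<Omega> \<psi> \<Longrightarrow>
     integral\<^sup>L (lebesgue_on \<Omega>) (\<lambda>x. flux x * hdotZ \<sigma> Z \<psi> x) =
       lam * integral\<^sup>L (lebesgue_on \<Omega>) (\<lambda>x. source x * \<psi> x)"
  using phi_sol[of \<psi>] by (simp add: set_integral_eq_integral_lebesgue_on[OF \<Omega>_lebesgue] flux_def source_def)

lemma hdotZ_bound:
  assumes "compact K"
  obtains S where "S \<ge> 0" "\<And>(f :: real^'n \<Rightarrow> 'b::real_normed_vector) x c. x \<in> K \<Longrightarrow>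
      (\<Sum>j\<in>UNIV. norm (partial j f x)) \<le> c \<Longrightarrow> norm (hdotZ \<sigma> Z f x) \<le> norm (Z x) * (S * c)"
proof -
  have "continuous_on K (\<lambda>x. \<Sum>j\<in>UNIV. \<Sum>i\<in>UNIV. \<bar>\<sigma> x $ i $ j\<bar>)"
    by (intro continuous_intros continuous_on_subset[OF sigma_cont]) auto
  then obtain S where S: "S \<ge> 0" "\<And>x. x \<in> K \<Longrightarrow> (\<Sum>j\<in>UNIV. \<Sum>i\<in>UNIV. \<bar>\<sigma> x $ i $ j\<bar>) \<le> S"
    using compact_upper_bound[OF assms] by blast
  have "norm (hdotZ \<sigma> Z f x) \<le> norm (Z x) * (S * c)"
    if "x \<in> K" "(\<Sum>j\<in>UNIV. norm (partial j f x)) \<le> c" for f :: "real^'n \<Rightarrow> 'b" and x c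
  proof -
    have "norm (Z x) * (\<Sum>j\<in>UNIV. \<Sum>i\<in>UNIV. \<bar>\<sigma> x $ i $ j\<bar>) * (\<Sum>j\<in>UNIV. norm (partial j f x))
        \<le> norm (Z x) * S * c"
      using S that by (intro mult_mono mult_left_mono sum_nonneg) auto
    then show ?thesis using norm_hdotZ_le[of \<sigma> Z f x] by (simp add: mult.assoc)
  qed
  with S(1) show ?thesis by (rule that)
qed

lemma flux_hdotZ_dominated:
  assumes K: "compact K" "K \<subseteq> \<Omega>"
  obtains g where "integrable (lebesgue_on \<Omega>) g"
    "\<And>f x. x \<in> \<Omega> \<Longrightarrow> (\<And>j. \<bar>partial j f x\<bar> \<le> B) \<Longrightarrow> (x \<notin> K \<Longrightarrow> hdotZ \<sigma> Z f x = 0) \<Longrightarrow>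
       \<bar>flux x * hdotZ \<sigma> Z f x\<bar> \<le> g x"
proof -
  obtain S where S: "S \<ge> 0" "\<And>(f :: real^'n \<Rightarrow> real) x c. x \<in> K \<Longrightarrow>
      (\<Sum>j\<in>UNIV. norm (partial j f x)) \<le> c \<Longrightarrow> norm (hdotZ \<sigma> Z f x) \<le> norm (Z x) * (S * c)"
    by (rule hdotZ_bound[OF K(1)]) (rule that)
  have "continuous_on K (\<lambda>x. \<Sum>j\<in>UNIV. norm (partial j \<phi> x))"
    by (intro continuous_intros continuous_on_subset[OF phi_partial_continuous K(2)])
  then obtain b where b: "b \<ge> 0" "\<And>x. x \<in> K \<Longrightarrow> (\<Sum>j\<in>UNIV. norm (partial j \<phi> x)) \<le> b"
    using compact_upper_bound[OF K(1)] by blast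
  define g where "g x = (S * b) powr (p - 1) * (S * (CARD('n) * B)) *
    (indicator K x * (V x * norm (Z x) powr p))" for x
  show ?thesis
  proof (rule that)
    show "integrable (lebesgue_on \<Omega>) g"
      unfolding g_def by (intro integrable_mult_right integrable_lebesgue_on_indicator VZ_loc K \<Omega>_lebesgue)
    fix f x assume x: "x \<in> \<Omega>" and B: "\<And>j. \<bar>partial j f x\<bar> \<le> B" and f0: "x \<notin> K \<Longrightarrow> hdotZ \<sigma> Z f x = 0"
    show "\<bar>flux x * hdotZ \<sigma> Z f x\<bar> \<le> g x"
    proof (cases "x \<in> K")
      case True
      have "(\<Sum>j\<in>UNIV. norm (partial j f x)) \<le> CARD('n) * B"
        using sum_mono[of UNIV "\<lambda>j. norm (partial j f x)" "\<lambda>_. B"] B by simp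
      from abs_powr_mult_le[OF p V_nonneg[OF x] norm_ge_zero mult_nonneg_nonneg[OF S(1) b(1)]
          S(2)[OF True b(2)[OF True], unfolded real_norm_def] S(2)[OF True this, unfolded real_norm_def]]
      show ?thesis using True by (simp add: flux_def g_def)
    qed (simp add: f0 g_def)
  qed
qed

lemma source_dominated:
  assumes K: "compact K" "K \<subseteq> \<Omega>"
  obtains g where "integrable (lebesgue_on \<Omega>) g"
    "\<And>h x. x \<in> \<Omega> \<Longrightarrow> \<bar>h\<bar> \<le> B \<Longrightarrow> (x \<notin> K \<Longrightarrow> h = 0) \<Longrightarrow> \<bar>source x * h\<bar> \<le> g x"
proof -
  have "continuous_on K (\<lambda>x. \<bar>\<phi> x\<bar> powr (p - 1))"
    using p by (intro continuous_on_powr' continuous_intros continuous_on_subset[OF phi_continuous K(2)]) auto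
  then obtain b where b: "b \<ge> 0" "\<And>x. x \<in> K \<Longrightarrow> \<bar>\<phi> x\<bar> powr (p - 1) \<le> b"
    using compact_upper_bound[OF K(1)] by blast
  show ?thesis
  proof (rule that)
    show "integrable (lebesgue_on \<Omega>) (\<lambda>x. b * B * (indicator K x * \<bar>W x\<bar>))"
      using W_loc unfolding loc_integrable_def
      by (intro integrable_mult_right integrable_lebesgue_on_indicator K \<Omega>_lebesgue)
        (auto simp: loc_integrable_def intro: set_integrable_abs)
    fix h x assume "x \<in> \<Omega>" "\<bar>h\<bar> \<le> B" and h0: "x \<notin> K \<Longrightarrow> h = 0"
    show "\<bar>source x * h\<bar> \<le> b * B * (indicator K x * \<bar>W x\<bar>)"
    proof (cases "x \<in> K")
      case True
      have "\<bar>source x * h\<bar> = \<bar>W x\<bar> * (\<bar>\<phi> x\<bar> powr (p - 2) * \<bar>\<phi> x\<bar>) * \<bar>h\<bar>"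
        by (simp add: source_def abs_mult)
      also have "\<bar>\<phi> x\<bar> powr (p - 2) * \<bar>\<phi> x\<bar> = \<bar>\<phi> x\<bar> powr (p - 1)"
        by (subst mult.commute, subst powr_mult_base) auto
      also have "\<bar>W x\<bar> * \<bar>\<phi> x\<bar> powr (p - 1) * \<bar>h\<bar> \<le> \<bar>W x\<bar> * b * B"
        using b(2)[OF True] \<open>\<bar>h\<bar> \<le> B\<close> b(1) by (intro mult_mono mult_left_mono) auto
      finally show ?thesis using True by (simp add: algebra_simps)
    qed (simp add: h0)
  qed
qed


lemma borel_measurable_flux: "flux \<in> borel_measurable (lebesgue_on \<Omega>)"
proof -
  have "hdotZ \<sigma> Z \<phi> \<in> borel_measurable (lebesgue_on \<Omega>)"
    by (rule borel_measurable_hdotZ_\<Omega>[OF phi_partial_continuous])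
  then show ?thesis
    unfolding flux_def[abs_def] using V_meas by measurable
qed

lemma borel_measurable_source_mult:
  assumes h: "continuous_on \<Omega> h" and K: "compact K" "K \<subseteq> \<Omega>" and h0: "\<And>x. x \<notin> K \<Longrightarrow> h x = 0"
  shows "(\<lambda>x. source x * h x) \<in> borel_measurable (lebesgue_on \<Omega>)"
proof -
  have "set_integrable lebesgue K W"
    using W_loc K unfolding loc_integrable_def by blast
  then have "(\<lambda>x. indicator K x * W x) \<in> borel_measurable lebesgue"
    unfolding set_integrable_def by (simp add: borel_measurable_integrable)
  then have W: "(\<lambda>x. indicator K x * W x) \<in> borel_measurable (lebesgue_on \<Omega>)"
    by (intro measurable_restrict_space1)
  have "\<phi> \<in> borel_measurable (lebesgue_on \<Omega>)" "h \<in> borel_measurable (lebesgue_on \<Omega>)"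
    using continuous_imp_measurable_on_sets_lebesgue[OF _ \<Omega>_lebesgue] phi_continuous h by auto
  with W have "(\<lambda>x. (indicator K x * W x) * \<bar>\<phi> x\<bar> powr (p - 2) * \<phi> x * h x) \<in> borel_measurable (lebesgue_on \<Omega>)"
    by measurable
  also have "(\<lambda>x. (indicator K x * W x) * \<bar>\<phi> x\<bar> powr (p - 2) * \<phi> x * h x) = (\<lambda>x. source x * h x)"
    by (auto simp: fun_eq_iff indicator_def source_def h0)
  finally show ?thesis .
qed

lemma flux_hdotZ_tendsto:
  assumes K: "compact K" "K \<subseteq> \<Omega>" and fs: "\<And>m. test_fun \<Omega> (fs m)" "\<And>m x. x \<notin> K \<Longrightarrow> fs m x = 0"
    and bound: "\<And>m j x. \<bar>partial j (fs m) x\<bar> \<le> B"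
    and lim: "\<And>j x. (\<lambda>m. partial j (fs m) x) \<longlonglongrightarrow> partial j f x"
  shows "integrable (lebesgue_on \<Omega>) (\<lambda>x. flux x * hdotZ \<sigma> Z f x)"
    and "(\<lambda>m. integral\<^sup>L (lebesgue_on \<Omega>) (\<lambda>x. flux x * hdotZ \<sigma> Z (fs m) x))
           \<longlonglongrightarrow> integral\<^sup>L (lebesgue_on \<Omega>) (\<lambda>x. flux x * hdotZ \<sigma> Z f x)"
proof -
  obtain g where g: "integrable (lebesgue_on \<Omega>) g"
    "\<And>f x. x \<in> \<Omega> \<Longrightarrow> (\<And>j. \<bar>partial j f x\<bar> \<le> B) \<Longrightarrow> (x \<notin> K \<Longrightarrow> hdotZ \<sigma> Z f x = 0) \<Longrightarrow>
       \<bar>flux x * hdotZ \<sigma> Z f x\<bar> \<le> g x"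
    using flux_hdotZ_dominated[OF K] by blast
  have "hdotZ \<sigma> Z (fs m) x = 0" if "x \<notin> K" for m x
    using partial_eq_0_outside(2)[OF compact_imp_closed[OF K(1)] fs(2) that]
    by (simp add: hdotZ_eq_sum_partial)
  then have dom: "\<bar>flux x * hdotZ \<sigma> Z (fs m) x\<bar> \<le> g x" if "x \<in> \<Omega>" for m x
    using g(2)[of x "fs m"] that bound by blast
  have meas: "(\<lambda>x. flux x * hdotZ \<sigma> Z (fs m) x) \<in> borel_measurable (lebesgue_on \<Omega>)" for m
    using borel_measurable_flux borel_measurable_hdotZ_\<Omega>[OF test_funD(2)[OF fs(1)]] by measurable
  have "(\<lambda>m. flux x * hdotZ \<sigma> Z (fs m) x) \<longlonglongrightarrow> flux x * hdotZ \<sigma> Z f x" for x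
    unfolding hdotZ_eq_sum_partial by (intro tendsto_intros lim)
  from dominated_convergence_lebesgue_on[OF meas g(1) dom this]
  show "integrable (lebesgue_on \<Omega>) (\<lambda>x. flux x * hdotZ \<sigma> Z f x)"
    and "(\<lambda>m. integral\<^sup>L (lebesgue_on \<Omega>) (\<lambda>x. flux x * hdotZ \<sigma> Z (fs m) x))
           \<longlonglongrightarrow> integral\<^sup>L (lebesgue_on \<Omega>) (\<lambda>x. flux x * hdotZ \<sigma> Z f x)"
    by simp_all
qed

lemma source_tendsto:
  assumes K: "compact K" "K \<subseteq> \<Omega>" and fs: "\<And>m. test_fun \<Omega> (fs m)" "\<And>m x. x \<notin> K \<Longrightarrow> fs m x = 0"
    and bound: "\<And>m x. \<bar>fs m x\<bar> \<le> B" and lim: "\<And>x. (\<lambda>m. fs m x) \<longlonglongrightarrow> f x"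
  shows "(\<lambda>m. integral\<^sup>L (lebesgue_on \<Omega>) (\<lambda>x. source x * fs m x))
           \<longlonglongrightarrow> integral\<^sup>L (lebesgue_on \<Omega>) (\<lambda>x. source x * f x)"
proof -
  obtain g where g: "integrable (lebesgue_on \<Omega>) g"
    "\<And>h x. x \<in> \<Omega> \<Longrightarrow> \<bar>h\<bar> \<le> B \<Longrightarrow> (x \<notin> K \<Longrightarrow> h = 0) \<Longrightarrow> \<bar>source x * h\<bar> \<le> g x"
    using source_dominated[OF K] by blast
  have "(\<lambda>x. source x * fs m x) \<in> borel_measurable (lebesgue_on \<Omega>)" for m
    by (rule borel_measurable_source_mult[OF test_funD(1)[OF fs(1)] K fs(2)])
  moreover have "\<bar>source x * fs m x\<bar> \<le> g x" if "x \<in> \<Omega>" for m x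
    using g(2)[of x "fs m x"] that bound fs(2) by blast
  moreover have "(\<lambda>m. source x * fs m x) \<longlonglongrightarrow> source x * f x" for x
    by (intro tendsto_mult_left lim)
  ultimately show ?thesis
    by (rule dominated_convergence_lebesgue_on(2)[OF _ g(1)])
qed

lemma weak_equation_C1:
  fixes \<psi> :: "real^'n \<Rightarrow> real"
  assumes \<psi>: "continuous_on UNIV \<psi>" "\<And>j x. partial_exists j \<psi> x" "\<And>j. continuous_on UNIV (partial j \<psi>)"
    and K: "compact K" "K \<subseteq> \<Omega>" and \<psi>0: "\<And>x. x \<notin> K \<Longrightarrow> \<psi> x = 0"
  shows "integrable (lebesgue_on \<Omega>) (\<lambda>x. flux x * hdotZ \<sigma> Z \<psi> x)"
    and "integral\<^sup>L (lebesgue_on \<Omega>) (\<lambda>x. flux x * hdotZ \<sigma> Z \<psi> x) =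
           lam * integral\<^sup>L (lebesgue_on \<Omega>) (\<lambda>x. source x * \<psi> x)"
proof -
  obtain K' and \<psi>s :: "nat \<Rightarrow> real^'n \<Rightarrow> real" and B where
    K': "compact K'" "K' \<subseteq> \<Omega>" and test: "\<And>m. test_fun \<Omega> (\<psi>s m)"
    and zero: "\<And>m x. x \<notin> K' \<Longrightarrow> \<psi>s m x = 0"
    and bound: "\<And>m x. \<bar>\<psi>s m x\<bar> \<le> B" "\<And>m j x. \<bar>partial j (\<psi>s m) x\<bar> \<le> B"
    and lim: "\<And>x. (\<lambda>m. \<psi>s m x) \<longlonglongrightarrow> \<psi> x" "\<And>j x. (\<lambda>m. partial j (\<psi>s m) x) \<longlonglongrightarrow> partial j \<psi> x"
    using test_fun_approx_C1[OF \<Omega> \<psi> K \<psi>0] by metis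
  note left = flux_hdotZ_tendsto[OF K' test zero bound(2) lim(2)]
  show "integrable (lebesgue_on \<Omega>) (\<lambda>x. flux x * hdotZ \<sigma> Z \<psi> x)"
    using left(1) by simp
  have "(\<lambda>m. integral\<^sup>L (lebesgue_on \<Omega>) (\<lambda>x. flux x * hdotZ \<sigma> Z (\<psi>s m) x))
      \<longlonglongrightarrow> lam * integral\<^sup>L (lebesgue_on \<Omega>) (\<lambda>x. source x * \<psi> x)"
    unfolding weak_equation[OF test]
    by (rule tendsto_mult_left[OF source_tendsto[OF K' test zero bound(1) lim(1)]])
  with left(2) show "integral\<^sup>L (lebesgue_on \<Omega>) (\<lambda>x. flux x * hdotZ \<sigma> Z \<psi> x) =
      lam * integral\<^sup>L (lebesgue_on \<Omega>) (\<lambda>x. source x * \<psi> x)"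
    by (rule LIMSEQ_unique)
qed

text \<open>Since \<open>\<phi> |\<phi>|\<^sup>-\<^sup>p = 1 / (|\<phi>|\<^sup>p\<^sup>-\<^sup>2 \<phi>)\<close>, testing the equation against \<open>picone_test u\<close>
  turns its right-hand side into \<open>\<lambda> \<integral> W |u|\<^sup>p\<close>.\<close>

definition picone_test :: "(real^'n \<Rightarrow> complex) \<Rightarrow> real^'n \<Rightarrow> real" where
  "picone_test u x = (if x \<in> \<Omega> then cmod (u x) powr p * (\<phi> x * \<bar>\<phi> x\<bar> powr (- p)) else 0)"

definition picone_test_partial :: "(real^'n \<Rightarrow> complex) \<Rightarrow> 'n \<Rightarrow> real^'n \<Rightarrow> real" where
  "picone_test_partial u j x = (if x \<in> \<Omega> then
      p * cmod (u x) powr (p - 2) * Re (cnj (u x) * partial j u x) * (\<phi> x * \<bar>\<phi> x\<bar> powr (- p))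
      + cmod (u x) powr p * ((1 - p) * \<bar>\<phi> x\<bar> powr (- p) * partial j \<phi> x)
    else 0)"

context
  fixes u :: "real^'n \<Rightarrow> complex"
  assumes u: "test_fun \<Omega> u"
begin

lemma picone_test_eq_0:
  assumes "x \<notin> closure {x. u x \<noteq> 0}"
  shows "picone_test u x = 0" "picone_test_partial u j x = 0"
  using test_funD(6)[OF u assms] p by (simp_all add: picone_test_def picone_test_partial_def)

lemma picone_test_has_partial:
  "((\<lambda>t. picone_test u (x + t *\<^sub>R axis j 1)) has_real_derivative picone_test_partial u j x) (at 0)"
proof (cases "x \<in> \<Omega>")
  case True
  define S where "S = {t::real. x + t *\<^sub>R axis j 1 \<in> \<Omega>}"
  have S: "open S" "0 \<in> S"
    unfolding S_def using True by (auto intro!: open_vimage[OF \<Omega>, unfolded vimage_def, simplified] continuous_intros)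
  have dN: "((\<lambda>t. cmod (u (x + t *\<^sub>R axis j 1)) powr p) has_real_derivative
      p * cmod (u x) powr (p - 2) * Re (cnj (u x) * partial j u x)) (at 0)"
    using has_real_derivative_norm_powr[OF p has_vector_derivative_partial[OF test_funD(3)[OF u True]]]
    by simp
  have "((\<lambda>t. \<phi> (x + t *\<^sub>R axis j 1)) has_real_derivative partial j \<phi> x) (at 0)"
    using has_vector_derivative_partial[OF phi_partial_exists[OF True]]
    by (simp add: has_real_derivative_iff_has_vector_derivative)
  from has_real_derivative_mult_abs_powr[OF this]
  have dQ: "((\<lambda>t. \<phi> (x + t *\<^sub>R axis j 1) * \<bar>\<phi> (x + t *\<^sub>R axis j 1)\<bar> powr (- p)) has_real_derivative
      (1 - p) * \<bar>\<phi> x\<bar> powr (- p) * partial j \<phi> x) (at 0)"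
    using phi_nz[OF True] by simp
  have "((\<lambda>t. cmod (u (x + t *\<^sub>R axis j 1)) powr p *
        (\<phi> (x + t *\<^sub>R axis j 1) * \<bar>\<phi> (x + t *\<^sub>R axis j 1)\<bar> powr (- p)))
      has_real_derivative picone_test_partial u j x) (at 0)"
    using DERIV_mult[OF dN dQ] True by (simp add: picone_test_partial_def algebra_simps)
  then show ?thesis
    by (rule has_field_derivative_transform_within_open[OF _ S]) (simp add: S_def picone_test_def)
next
  case False
  then have "x \<notin> closure {x. u x \<noteq> 0}" using test_funD(5)[OF u] by blast
  then show ?thesis
    using has_vector_derivative_zero_outside[OF closed_closure picone_test_eq_0(1)]
      picone_test_eq_0(2)[of x j]
    by (simp add: has_real_derivative_iff_has_vector_derivative)
qed

lemma continuous_on_picone_test_factors: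
  shows "continuous_on \<Omega> (\<lambda>x. cmod (u x) powr p)"
    and "continuous_on \<Omega> (\<lambda>x. \<bar>\<phi> x\<bar> powr (- p))"
    and "continuous_on \<Omega> (\<lambda>x. \<phi> x * \<bar>\<phi> x\<bar> powr (- p))"
proof -
  show "continuous_on \<Omega> (\<lambda>x. cmod (u x) powr p)"
    using p by (intro continuous_on_powr' continuous_intros test_funD(1)[OF u]) auto
  show \<phi>: "continuous_on \<Omega> (\<lambda>x. \<bar>\<phi> x\<bar> powr (- p))"
    using phi_nz by (intro continuous_on_powr continuous_intros phi_continuous) auto
  show "continuous_on \<Omega> (\<lambda>x. \<phi> x * \<bar>\<phi> x\<bar> powr (- p))"
    by (rule continuous_on_mult[OF phi_continuous \<phi>])
qed

lemma continuous_on_picone_test: "continuous_on UNIV (picone_test u)"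
proof (rule continuous_on_UNIV_zero_outside[OF \<Omega> _ closed_closure test_funD(5)[OF u] picone_test_eq_0(1)])
  have "continuous_on \<Omega> (\<lambda>x. cmod (u x) powr p * (\<phi> x * \<bar>\<phi> x\<bar> powr (- p)))"
    by (rule continuous_on_mult[OF continuous_on_picone_test_factors(1,3)])
  then show "continuous_on \<Omega> (picone_test u)"
    by (rule continuous_on_eq) (simp add: picone_test_def)
qed

lemma continuous_on_picone_test_partial: "continuous_on UNIV (picone_test_partial u j)"
proof (rule continuous_on_UNIV_zero_outside[OF \<Omega> _ closed_closure test_funD(5)[OF u] picone_test_eq_0(2)])
  have A: "continuous_on \<Omega> (\<lambda>x. cmod (u x) powr (p - 2) * Re (cnj (u x) * partial j u x))"
    by (rule continuous_on_norm_powr_mult_Re_cnj[OF p test_funD(1,2)[OF u]])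
  have "continuous_on \<Omega> (\<lambda>x. p * (cmod (u x) powr (p - 2) * Re (cnj (u x) * partial j u x))
      * (\<phi> x * \<bar>\<phi> x\<bar> powr (- p)) + cmod (u x) powr p * ((1 - p) * \<bar>\<phi> x\<bar> powr (- p) * partial j \<phi> x))"
    by (intro continuous_on_add continuous_on_mult[OF continuous_on_mult_left[OF A]]
        continuous_on_mult[OF continuous_on_picone_test_factors(1)]
        continuous_on_mult[OF continuous_on_mult_left[OF continuous_on_picone_test_factors(2)]]
        continuous_on_picone_test_factors(3) phi_partial_continuous)
  then show "continuous_on \<Omega> (picone_test_partial u j)"
    by (rule continuous_on_eq) (simp add: picone_test_partial_def mult.assoc)
qed

lemma partial_picone_test:
  "partial_exists j (picone_test u) x" "partial j (picone_test u) = picone_test_partial u j"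
  using partial_from_real_derivative[OF picone_test_has_partial] by auto

lemma weak_equation_picone_test:
  "integrable (lebesgue_on \<Omega>) (\<lambda>x. flux x * hdotZ \<sigma> Z (picone_test u) x)"
  "integral\<^sup>L (lebesgue_on \<Omega>) (\<lambda>x. flux x * hdotZ \<sigma> Z (picone_test u) x) =
     lam * integral\<^sup>L (lebesgue_on \<Omega>) (\<lambda>x. source x * picone_test u x)"
  using weak_equation_C1[OF continuous_on_picone_test partial_picone_test(1)
      continuous_on_picone_test_partial[folded partial_picone_test(2)]
      test_funD(4,5)[OF u] picone_test_eq_0(1)]
  by simp_all


lemma hdotZ_divide_phi:
  assumes x: "x \<in> \<Omega>"
  shows "hdotZ \<sigma> Z (\<lambda>y. u y / of_real (\<phi> y)) x =
    (hdotZ \<sigma> Z u x * of_real (\<phi> x) - u x * of_real (hdotZ \<sigma> Z \<phi> x)) / of_real ((\<phi> x)\<^sup>2)"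
proof -
  have "partial j (\<lambda>y. u y / of_real (\<phi> y)) x =
      (partial j u x * of_real (\<phi> x) - u x * of_real (partial j \<phi> x)) / of_real ((\<phi> x)\<^sup>2)" for j
  proof -
    have "((\<lambda>t. \<phi> (x + t *\<^sub>R axis j 1)) has_real_derivative partial j \<phi> x) (at 0)"
      using has_vector_derivative_partial[OF phi_partial_exists[OF x]]
      by (simp add: has_real_derivative_iff_has_vector_derivative)
    from has_vector_derivative_divide_of_real[OF has_vector_derivative_partial[OF test_funD(3)[OF u x]] this]
    show ?thesis using phi_nz[OF x] by (intro partial_from_vector_derivative(2)) simp
  qed
  then show ?thesis
    unfolding hdotZ_eq_sum_partial
    by (simp add: scaleR_conv_of_real sum_divide_distrib[symmetric] sum_distrib_left sum_distrib_right
        sum_subtractf algebra_simps)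
qed

lemma hdotZ_picone_test:
  assumes x: "x \<in> \<Omega>"
  shows "hdotZ \<sigma> Z (picone_test u) x =
    p * cmod (u x) powr (p - 2) * Re (cnj (u x) * hdotZ \<sigma> Z u x) * (\<phi> x * \<bar>\<phi> x\<bar> powr (- p))
    + cmod (u x) powr p * ((1 - p) * \<bar>\<phi> x\<bar> powr (- p) * hdotZ \<sigma> Z \<phi> x)"
proof -
  define c where "c j = (\<Sum>i\<in>UNIV. Z x $ i * \<sigma> x $ i $ j)" for j
  have "hdotZ \<sigma> Z (picone_test u) x = (\<Sum>j\<in>UNIV. c j *
      ((p * cmod (u x) powr (p - 2)) * Re (cnj (u x) * partial j u x) * (\<phi> x * \<bar>\<phi> x\<bar> powr (- p))
       + cmod (u x) powr p * (((1 - p) * \<bar>\<phi> x\<bar> powr (- p)) * partial j \<phi> x)))"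
    using x unfolding hdotZ_eq_sum_partial partial_picone_test(2)
    by (simp add: picone_test_partial_def c_def mult.assoc)
  also have "\<dots> = (p * cmod (u x) powr (p - 2)) * Re (cnj (u x) * (\<Sum>j\<in>UNIV. c j *\<^sub>R partial j u x))
      * (\<phi> x * \<bar>\<phi> x\<bar> powr (- p))
      + cmod (u x) powr p * (((1 - p) * \<bar>\<phi> x\<bar> powr (- p)) * (\<Sum>j\<in>UNIV. c j * partial j \<phi> x))"
    by (rule sum_mult_Re_cnj_distrib)
  finally show ?thesis
    by (simp add: hdotZ_eq_sum_partial c_def mult.assoc)
qed

lemma Cp_eq_Picone:
  assumes x: "x \<in> \<Omega>"
  shows "Cp p (of_real (V x powr (1/p)) * hdotZ \<sigma> Z u x)
            (of_real (V x powr (1/p) * \<phi> x) * hdotZ \<sigma> Z (\<lambda>y. u y / of_real (\<phi> y)) x)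
       = V x * cmod (hdotZ \<sigma> Z u x) powr p - flux x * hdotZ \<sigma> Z (picone_test u) x"
  unfolding hdotZ_divide_phi[OF x] hdotZ_picone_test[OF x] flux_def
  by (rule Cp_Picone_identity[OF p V_nonneg[OF x] phi_nz[OF x]])

lemma source_mult_picone_test:
  assumes x: "x \<in> \<Omega>"
  shows "source x * picone_test u x = W x * cmod (u x) powr p"
proof -
  have "\<bar>\<phi> x\<bar> powr (p - 2) * \<bar>\<phi> x\<bar> powr (- p) = \<bar>\<phi> x\<bar> powr (- 2)"
    by (simp flip: powr_add)
  also have "\<dots> = inverse ((\<phi> x)\<^sup>2)"
    using phi_nz[OF x] by (simp add: powr_minus powr_realpow')
  finally have e: "\<bar>\<phi> x\<bar> powr (p - 2) * \<bar>\<phi> x\<bar> powr (- p) = inverse ((\<phi> x)\<^sup>2)" .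
  have "source x * picone_test u x
      = W x * cmod (u x) powr p * ((\<bar>\<phi> x\<bar> powr (p - 2) * \<bar>\<phi> x\<bar> powr (- p)) * (\<phi> x * \<phi> x))"
    using x by (simp add: source_def picone_test_def algebra_simps)
  also have "\<dots> = W x * cmod (u x) powr p"
    unfolding e using phi_nz[OF x] by (simp add: power2_eq_square field_simps)
  finally show ?thesis .
qed

end

lemma integrable_V_norm_hdotZ_powr:
  assumes u: "test_fun \<Omega> u"
  shows "integrable (lebesgue_on \<Omega>) (\<lambda>x. V x * cmod (hdotZ \<sigma> Z u x) powr p)"
proof -
  let ?K = "closure {x. u x \<noteq> 0}"
  note K = test_funD(4,5)[OF u]
  obtain S where S: "S \<ge> 0" "\<And>(f :: real^'n \<Rightarrow> complex) x c. x \<in> ?K \<Longrightarrow>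
      (\<Sum>j\<in>UNIV. norm (partial j f x)) \<le> c \<Longrightarrow> norm (hdotZ \<sigma> Z f x) \<le> norm (Z x) * (S * c)"
    by (rule hdotZ_bound[OF K(1)]) (rule that)
  have "continuous_on ?K (\<lambda>x. \<Sum>j\<in>UNIV. norm (partial j u x))"
    by (intro continuous_intros continuous_on_subset[OF test_funD(2)[OF u] K(2)])
  then obtain b where b: "b \<ge> 0" "\<And>x. x \<in> ?K \<Longrightarrow> (\<Sum>j\<in>UNIV. norm (partial j u x)) \<le> b"
    using compact_upper_bound[OF K(1)] by blast
  have bound: "V x * cmod (hdotZ \<sigma> Z u x) powr p \<le> (S * b) powr p * (indicator ?K x * (V x * norm (Z x) powr p))"
    if x: "x \<in> \<Omega>" for x
  proof (cases "x \<in> ?K")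
    case True
    have "V x * cmod (hdotZ \<sigma> Z u x) powr p \<le> V x * (norm (Z x) * (S * b)) powr p"
      using S(2)[OF True b(2)[OF True]] p V_nonneg[OF x] by (intro mult_left_mono powr_mono2) auto
    then show ?thesis using True by (simp add: powr_mult mult_ac)
  next
    case False
    have "partial j u x = 0" for j
      by (rule partial_eq_0_outside(2)[OF closed_closure _ False]) (rule test_funD(6)[OF u])
    then have "hdotZ \<sigma> Z u x = 0"
      by (simp add: hdotZ_eq_sum_partial)
    then show ?thesis using p False by simp
  qed
  moreover have "(\<lambda>x. V x * cmod (hdotZ \<sigma> Z u x) powr p) \<in> borel_measurable (lebesgue_on \<Omega>)"
    using V_meas borel_measurable_hdotZ_\<Omega>[OF test_funD(2)[OF u]] by measurable
  ultimately show ?thesis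
    using V_nonneg
    by (intro integrable_lebesgue_on_bound[OF integrable_mult_right[OF
          integrable_lebesgue_on_indicator[OF VZ_loc K \<Omega>_lebesgue]]]) auto
qed

end


theorem theorem3p1:
  fixes p :: real and \<Omega> :: "(real^'n::finite) set"
    and \<sigma> :: "real^'n \<Rightarrow> real^'n^'l::finite"
    and Z :: "real^'n \<Rightarrow> real^'l" and V W :: "real^'n \<Rightarrow> real"
    and lam :: real and \<phi> :: "real^'n \<Rightarrow> real" and u :: "real^'n \<Rightarrow> complex"
  assumes sigma_cont: "\<And>i j. continuous_on UNIV (\<lambda>x. \<sigma> x $ i $ j)"
    and sigma_pd: "\<And>i j x. partial_exists j (\<lambda>x. \<sigma> x $ i $ j) x"
    and sigma_pd_cont: "\<And>i j. continuous_on UNIV (partial j (\<lambda>x. \<sigma> x $ i $ j))"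
    and p: "1 < p"
    and \<Omega>: "open \<Omega>"
    and Z_meas: "Z \<in> borel_measurable (lebesgue_on \<Omega>)"
    and V_meas: "V \<in> borel_measurable (lebesgue_on \<Omega>)"
    and V_nonneg: "\<And>x. x \<in> \<Omega> \<Longrightarrow> V x \<ge> 0"
    and W_loc: "loc_integrable \<Omega> W"
    and VZ_loc: "loc_integrable \<Omega> (\<lambda>x. V x * norm (Z x) powr p)"
    and lam: "lam > 0"
    and phi_C1: "C1_on \<Omega> \<phi>"
    and phi_nz: "\<And>x. x \<in> \<Omega> \<Longrightarrow> \<phi> x \<noteq> 0"
    and phi_sol: "\<And>\<psi> :: real^'n \<Rightarrow> real. test_fun \<Omega> \<psi> \<Longrightarrow>
        (LINT x:\<Omega>|lebesgue. V x * \<bar>hdotZ \<sigma> Z \<phi> x\<bar> powr (p - 2) * hdotZ \<sigma> Z \<phi> x * hdotZ \<sigma> Z \<psi> x)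
        = lam *  (LINT x:\<Omega>|lebesgue. W x * \<bar>\<phi> x\<bar> powr (p - 2) * \<phi> x * \<psi> x)"
    and u: "test_fun \<Omega> u"
  shows "(LINT x:\<Omega>|lebesgue. V x * norm (hdotZ \<sigma> Z u x) powr p)
       = lam *  (LINT x:\<Omega>|lebesgue. W x * norm (u x) powr p)
         + (LINT x:\<Omega>|lebesgue.
              Cp p (complex_of_real (V x powr (1 / p)) * hdotZ \<sigma> Z u x)
                   (complex_of_real (V x powr (1 / p) * \<phi> x)
                      * hdotZ \<sigma> Z (\<lambda>y. u y / complex_of_real (\<phi> y)) x))"
proof -
  interpret weak_solution p \<Omega> \<sigma> Z V W lam \<phi>
    using sigma_cont p \<Omega> Z_meas V_meas V_nonneg W_loc VZ_loc phi_C1 phi_nz phi_sol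
    by unfold_locales auto
  have "(LINT x:\<Omega>|lebesgue.
          Cp p (complex_of_real (V x powr (1 / p)) * hdotZ \<sigma> Z u x)
               (complex_of_real (V x powr (1 / p) * \<phi> x) * hdotZ \<sigma> Z (\<lambda>y. u y / complex_of_real (\<phi> y)) x))
      = integral\<^sup>L (lebesgue_on \<Omega>)
          (\<lambda>x. V x * cmod (hdotZ \<sigma> Z u x) powr p - flux x * hdotZ \<sigma> Z (picone_test u) x)"
    unfolding set_integral_eq_integral_lebesgue_on[OF \<Omega>_lebesgue]
    by (rule Bochner_Integration.integral_cong[OF refl], rule Cp_eq_Picone[OF u]) simp
  also have "\<dots> = integral\<^sup>L (lebesgue_on \<Omega>) (\<lambda>x. V x * cmod (hdotZ \<sigma> Z u x) powr p)
      - lam * integral\<^sup>L (lebesgue_on \<Omega>) (\<lambda>x. source x * picone_test u x)"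
    using Bochner_Integration.integral_diff[OF integrable_V_norm_hdotZ_powr[OF u] weak_equation_picone_test(1)[OF u]]
    by (simp add: weak_equation_picone_test(2)[OF u])
  also have "integral\<^sup>L (lebesgue_on \<Omega>) (\<lambda>x. source x * picone_test u x)
      = integral\<^sup>L (lebesgue_on \<Omega>) (\<lambda>x. W x * cmod (u x) powr p)"
    by (rule Bochner_Integration.integral_cong) (simp_all add: source_mult_picone_test[OF u])
  finally show ?thesis
    unfolding set_integral_eq_integral_lebesgue_on[OF \<Omega>_lebesgue] by simp
qed

end
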